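(* Assume $M$ has genus zero, $q=2$, $a\in(0,1)$ and $b\in(0,1]$, and fix a bijection of $Q$ with $\{0,1\}$, so that configurations in $Q^{\mathsf V}$ are identified with subsets of $\mathsf V$. Then the marginal law of $\mathrm s$ under $\tilde\mu$, and hence also the marginal law of $\sigma$ under $\mathbf P$, satisfies the FKG lattice condition: $\nu(\xi_1\cap\xi_2)\nu(\xi_1\cup\xi_2)\ge\nu(\xi_1)\nu(\xi_2)$ for all $\xi_1,\xi_2\subseteq\mathsf V$.
   Context: $M$ is the sphere or the plane. Let $\mathsf G=(\mathsf V,\mathsf E)$ be a finite connected graph embedded in $M$ with all faces topological discs, and $\mathsf G^*=(\mathsf U,\mathsf E^* )$ its embedded dual ($\mathsf U$ = faces of $\mathsf G$); $e^*$ is the dual edge crossing $e$, $\xi^*=\{e^*:e\in\xi\}$. Fix integers $q,q'\ge1$ and finite $Q,Q'\subset\mathbb C$ with $Q=-Q$, $Q'=-Q'$, $|Q|=q$, $|Q'|=q'$. For $\sigma:\mathsf V\to Q$, $\eta(\sigma)\subseteq\mathsf E^*$ is the set of $e^*$ whose primal $e$ has endpoints with different $\sigma$-values; for $\sigma':\mathsf U\to Q'$, $\eta(\sigma')\subseteq\mathsf E$ is the set of $e$ whose dual $e^*$ has endpoints with different $\sigma'$-values. $\mathbf P(\sigma,\sigma')\propto a^{|\eta(\sigma')|}b^{|\eta(\sigma)|}$ on $\Sigma=\{(\sigma,\sigma'):\eta(\sigma)^*\cap\eta(\sigma')=\emptyset\}$. With $\alpha=\ln\frac{1-a}{b}$ and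 $\beta=\ln\big(1+\frac{q'a}{1-a}\big)$, $\tilde\mu$ is the measure on $(\mathrm s,\mathrm s')\in Q^{\mathsf V}\times Q'^{\mathsf V}$ with $\tilde\mu(\mathrm s,\mathrm s')\propto\exp\big(\sum_{\{v_1,v_2\}\in\mathsf E}\delta_{\mathrm s(v_1),\mathrm s(v_2)}(\alpha+\beta\delta_{\mathrm s'(v_1),\mathrm s'(v_2)})\big)$, $\delta$ the Kronecker delta. *)

theory Defs
  imports "HOL-Analysis.Analysis" "HOL-Combinatorics.Permutations"
begin

text \<open>A finite connected graph cellularly embedded (all faces discs) in an oriented surface is
encoded, up to homeomorphism, by a combinatorial map: a finite set of darts D (half-edges),
a fixed-point-free involution alpha (the two darts of an edge) and a permutation rot
(the cyclic order of darts around each vertex).  The dual edge e* of an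
edge e is represented by the same pair of darts; its endpoints are the faces of these darts.\<close>

definition orb :: "('d \<Rightarrow> 'd) \<Rightarrow> 'd \<Rightarrow> 'd set" where
  "orb f d = {(f ^^ n) d | n. True}"

definition vtx :: "('d \<Rightarrow> 'd) \<Rightarrow> 'd \<Rightarrow> 'd set" where
  "vtx rot d = orb rot d"

definition fce :: "('d \<Rightarrow> 'd) \<Rightarrow> ('d \<Rightarrow> 'd) \<Rightarrow> 'd \<Rightarrow> 'd set" where
  "fce alpha rot d = orb (rot \<circ> alpha) d"

definition Verts :: "'d set \<Rightarrow> ('d \<Rightarrow> 'd) \<Rightarrow> 'd set set" where
  "Verts D rot = vtx rot ` D"

definition Faces :: "'d set \<Rightarrow> ('d \<Rightarrow> 'd) \<Rightarrow> ('d \<Rightarrow> 'd) \<Rightarrow> 'd set set" where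
  "Faces D alpha rot = fce alpha rot ` D"

definition Edges :: "'d set \<Rightarrow> ('d \<Rightarrow> 'd) \<Rightarrow> 'd set set" where
  "Edges D alpha = (\<lambda>d. {d, alpha d}) ` D"

definition comb_map :: "'d set \<Rightarrow> ('d \<Rightarrow> 'd) \<Rightarrow> ('d \<Rightarrow> 'd) \<Rightarrow> bool" where
  "comb_map D alpha rot \<longleftrightarrow> finite D \<and> D \<noteq> {} \<and> alpha permutes D \<and> rot permutes D \<and>
     (\<forall>d\<in>D. alpha d \<noteq> d \<and> alpha (alpha d) = d)"

definition map_connected :: "'d set \<Rightarrow> ('d \<Rightarrow> 'd) \<Rightarrow> ('d \<Rightarrow> 'd) \<Rightarrow> bool" where
  "map_connected D alpha rot \<longleftrightarrow>
     (\<forall>d\<in>D. \<forall>d'\<in>D. (d, d') \<in> ({(x, alpha x) | x. x \<in> D} \<union> {(x, rot x) | x. x \<in> D})\<^sup>*)"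

definition genus_zero :: "'d set \<Rightarrow> ('d \<Rightarrow> 'd) \<Rightarrow> ('d \<Rightarrow> 'd) \<Rightarrow> bool" where
  "genus_zero D alpha rot \<longleftrightarrow>
     int (card (Verts D rot)) - int (card (Edges D alpha)) + int (card (Faces D alpha rot)) = 2"

definition planar_map :: "'d set \<Rightarrow> ('d \<Rightarrow> 'd) \<Rightarrow> ('d \<Rightarrow> 'd) \<Rightarrow> bool" where
  "planar_map D alpha rot \<longleftrightarrow> comb_map D alpha rot \<and> map_connected D alpha rot \<and> genus_zero D alpha rot"

text \<open>eta(sigma): the edges e whose primal endpoints carry different sigma-values
(as a set of edges, i.e. the primal edges of the dual edges in eta(sigma)).\<close>
definition eta_primal :: "'d set \<Rightarrow> ('d \<Rightarrow> 'd) \<Rightarrow> ('d \<Rightarrow> 'd) \<Rightarrow> ('d set \<Rightarrow> complex) \<Rightarrow> 'd set set" where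
  "eta_primal D alpha rot \<sigma> =
     {{d, alpha d} | d. d \<in> D \<and> \<sigma> (vtx rot d) \<noteq> \<sigma> (vtx rot (alpha d))}"

definition eta_dual :: "'d set \<Rightarrow> ('d \<Rightarrow> 'd) \<Rightarrow> ('d \<Rightarrow> 'd) \<Rightarrow> ('d set \<Rightarrow> complex) \<Rightarrow> 'd set set" where
  "eta_dual D alpha rot \<sigma>' =
     {{d, alpha d} | d. d \<in> D \<and> \<sigma>' (fce alpha rot d) \<noteq> \<sigma>' (fce alpha rot (alpha d))}"

definition Sigma_space :: "'d set \<Rightarrow> ('d \<Rightarrow> 'd) \<Rightarrow> ('d \<Rightarrow> 'd) \<Rightarrow> complex set \<Rightarrow> complex set
     \<Rightarrow> (('d set \<Rightarrow> complex) \<times> ('d set \<Rightarrow> complex)) set" where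
  "Sigma_space D alpha rot Q Q' =
     {(\<sigma>, \<sigma>'). \<sigma> \<in> Verts D rot \<rightarrow>\<^sub>E Q \<and> \<sigma>' \<in> Faces D alpha rot \<rightarrow>\<^sub>E Q' \<and>
        eta_primal D alpha rot \<sigma> \<inter> eta_dual D alpha rot \<sigma>' = {}}"

definition P_weight :: "'d set \<Rightarrow> ('d \<Rightarrow> 'd) \<Rightarrow> ('d \<Rightarrow> 'd) \<Rightarrow> real \<Rightarrow> real
     \<Rightarrow> ('d set \<Rightarrow> complex) \<Rightarrow> ('d set \<Rightarrow> complex) \<Rightarrow> real" where
  "P_weight D alpha rot a b \<sigma> \<sigma>' =
     a ^ card (eta_dual D alpha rot \<sigma>') * b ^ card (eta_primal D alpha rot \<sigma>)"

definition P_prob :: "'d set \<Rightarrow> ('d \<Rightarrow> 'd) \<Rightarrow> ('d \<Rightarrow> 'd) \<Rightarrow> complex set \<Rightarrow> complex set \<Rightarrow> real \<Rightarrow> real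
     \<Rightarrow> ('d set \<Rightarrow> complex) \<Rightarrow> ('d set \<Rightarrow> complex) \<Rightarrow> real" where
  "P_prob D alpha rot Q Q' a b \<sigma> \<sigma>' =
     (if (\<sigma>, \<sigma>') \<in> Sigma_space D alpha rot Q Q'
      then P_weight D alpha rot a b \<sigma> \<sigma>' /
           (\<Sum>p\<in>Sigma_space D alpha rot Q Q'. P_weight D alpha rot a b (fst p) (snd p))
      else 0)"

definition P_marg :: "'d set \<Rightarrow> ('d \<Rightarrow> 'd) \<Rightarrow> ('d \<Rightarrow> 'd) \<Rightarrow> complex set \<Rightarrow> complex set \<Rightarrow> real \<Rightarrow> real
     \<Rightarrow> ('d set \<Rightarrow> complex) \<Rightarrow> real" where
  "P_marg D alpha rot Q Q' a b \<sigma> =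
     (\<Sum>\<sigma>'\<in>Faces D alpha rot \<rightarrow>\<^sub>E Q'. P_prob D alpha rot Q Q' a b \<sigma> \<sigma>')"

definition kdelta :: "complex \<Rightarrow> complex \<Rightarrow> real" where
  "kdelta x y = (if x = y then 1 else 0)"

definition alpha_par :: "real \<Rightarrow> real \<Rightarrow> real" where
  "alpha_par a b = ln ((1 - a) / b)"

definition beta_par :: "nat \<Rightarrow> real \<Rightarrow> real" where
  "beta_par q' a = ln (1 + real q' * a / (1 - a))"

text \<open>unnormalised weight of (s, s') under mu-tilde; the sum over edges {v1,v2} of the
(multi)graph G ranges over the dart pairs {d, alpha d}, with endpoints vtx d, vtx (alpha d).\<close>
definition mu_weight :: "'d set \<Rightarrow> ('d \<Rightarrow> 'd) \<Rightarrow> ('d \<Rightarrow> 'd) \<Rightarrow> nat \<Rightarrow> real \<Rightarrow> real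
     \<Rightarrow> ('d set \<Rightarrow> complex) \<Rightarrow> ('d set \<Rightarrow> complex) \<Rightarrow> real" where
  "mu_weight D alpha rot q' a b s s' =
     exp (\<Sum>e\<in>Edges D alpha.
       (let d = (SOME d. d \<in> D \<and> e = {d, alpha d}); v1 = vtx rot d; v2 = vtx rot (alpha d) in
        kdelta (s v1) (s v2) * (alpha_par a b + beta_par q' a * kdelta (s' v1) (s' v2))))"

definition mu_prob :: "'d set \<Rightarrow> ('d \<Rightarrow> 'd) \<Rightarrow> ('d \<Rightarrow> 'd) \<Rightarrow> complex set \<Rightarrow> complex set \<Rightarrow> real \<Rightarrow> real
     \<Rightarrow> ('d set \<Rightarrow> complex) \<Rightarrow> ('d set \<Rightarrow> complex) \<Rightarrow> real" where
  "mu_prob D alpha rot Q Q' a b s s' =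
     (if s \<in> Verts D rot \<rightarrow>\<^sub>E Q \<and> s' \<in> Verts D rot \<rightarrow>\<^sub>E Q'
      then mu_weight D alpha rot (card Q') a b s s' /
           (\<Sum>p\<in>(Verts D rot \<rightarrow>\<^sub>E Q) \<times> (Verts D rot \<rightarrow>\<^sub>E Q').
              mu_weight D alpha rot (card Q') a b (fst p) (snd p))
      else 0)"

definition mu_marg :: "'d set \<Rightarrow> ('d \<Rightarrow> 'd) \<Rightarrow> ('d \<Rightarrow> 'd) \<Rightarrow> complex set \<Rightarrow> complex set \<Rightarrow> real \<Rightarrow> real
     \<Rightarrow> ('d set \<Rightarrow> complex) \<Rightarrow> real" where
  "mu_marg D alpha rot Q Q' a b s =
     (\<Sum>s'\<in>Verts D rot \<rightarrow>\<^sub>E Q'. mu_prob D alpha rot Q Q' a b s s')"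

definition config_of :: "(complex \<Rightarrow> nat) \<Rightarrow> complex set \<Rightarrow> 'd set set \<Rightarrow> 'd set set \<Rightarrow> ('d set \<Rightarrow> complex)" where
  "config_of f Q V \<xi> = (\<lambda>v. if v \<in> V then inv_into Q f (if v \<in> \<xi> then 1 else 0) else undefined)"

definition FKG_lattice :: "'v set \<Rightarrow> ('v set \<Rightarrow> real) \<Rightarrow> bool" where
  "FKG_lattice V \<nu> \<longleftrightarrow> (\<forall>\<xi>1 \<xi>2. \<xi>1 \<subseteq> V \<longrightarrow> \<xi>2 \<subseteq> V \<longrightarrow>
      \<nu> (\<xi>1 \<inter> \<xi>2) * \<nu> (\<xi>1 \<union> \<xi>2) \<ge> \<nu> \<xi>1 * \<nu> \<xi>2)"

end

(*
  Fix xi, a set of vertices, and let A(xi) be the set of edges whose two endpoints are both in xi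
  or both outside it.  Given s = xi, the field s' of mu-tilde only interacts along A(xi), each
  such edge carrying the weight ((1 - a) + q' a [s' agrees across it]) / b.  The Fortuin-Kasteleyn
  expansion then gives

    nu(xi)  ~  (1/b)^|A(xi)| * E_a[ q'^(|omega| + k(omega)) ],

  where omega is Bernoulli(a) percolation on A(xi) and k(omega) counts the clusters of (V, omega).
  For P the same expression appears after summing out sigma' with the FK expansion on the dual
  graph, because in genus zero the dual clusters of E - omega number |omega| + k(omega) + 1 - |V|;
  this duality follows from Euler's formula and a parity count of darts.

  A(xi) is the disjoint union of the edges inside xi and those inside V - xi, and k is additive
  over such a split, so nu(xi) q'^|V| = J(xi) J(V - xi), where J(S) is the same expression over
  the edges inside S.  Since k is supermodular and drops by at most one per added edge,
  q'^(|omega| + k(omega)) is increasing and log-supermodular; the four functions theorem carries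
  log-supermodularity over to its Bernoulli average, the edge sets inside S grow supermodularly
  with S, and 1/b >= 1.  Hence J, and with it xi |-> J(xi) J(V - xi), satisfies the FKG lattice
  condition.
*)
theory Submission
  imports Defs "HOL-Combinatorics.Orbits"
begin

section \<open>The four functions theorem\<close>

lemma add_le_add_of_mult_le:
  fixes P R M T :: real
  assumes "0 \<le> P" "P \<le> M" "0 \<le> R" "R \<le> M" "0 \<le> T" "P * R \<le> M * T"
  shows "P + R \<le> M + T"
proof (cases "M = 0")
  case True
  then show ?thesis using assms by linarith
next
  case False
  then have "M > 0" using assms by linarith
  have "0 \<le> (M - P) * (M - R)" using assms by simp
  then have "M * (P + R) \<le> M * M + P * R" by (simp add: algebra_simps)
  also have "\<dots> \<le> M * (M + T)" using assms by (simp add: algebra_simps)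
  finally show ?thesis using \<open>M > 0\<close> by simp
qed

lemma four_functions_base:
  fixes a0 a1 b0 b1 c0 c1 d0 d1 :: real
  assumes "0 \<le> a0" "0 \<le> a1" "0 \<le> b0" "0 \<le> b1" "0 \<le> c0" "0 \<le> c1" "0 \<le> d0" "0 \<le> d1"
    and "a0 * b0 \<le> c0 * d0" "a0 * b1 \<le> c1 * d0" "a1 * b0 \<le> c1 * d0" "a1 * b1 \<le> c1 * d1"
  shows "(a0 + a1) * (b0 + b1) \<le> (c0 + c1) * (d0 + d1)"
proof -
  have "(a0 * b1) * (a1 * b0) = (a0 * b0) * (a1 * b1)" by simp
  also have "\<dots> \<le> (c0 * d0) * (c1 * d1)" by (rule mult_mono) (use assms in auto)
  also have "\<dots> = (c1 * d0) * (c0 * d1)" by simp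
  finally have "a0 * b1 + a1 * b0 \<le> c1 * d0 + c0 * d1"
    using assms by (intro add_le_add_of_mult_le) auto
  then show ?thesis using assms by (simp add: algebra_simps)
qed

lemma sum_Pow_insert:
  assumes "finite N" "n \<notin> N"
  shows "(\<Sum>x\<in>Pow (insert n N). g x) = (\<Sum>x\<in>Pow N. g x + g (insert n x))"
proof -
  have "inj_on (insert n) (Pow N)" using assms(2) by (auto simp: inj_on_def)
  moreover have "Pow N \<inter> insert n ` Pow N = {}" using assms(2) by blast
  ultimately show ?thesis
    using assms(1) by (simp add: Pow_insert sum.union_disjoint sum.reindex sum.distrib)
qed

theorem four_functions:
  fixes A B C D :: "'a set \<Rightarrow> real"
  assumes "finite N"
    and "\<And>x. x \<subseteq> N \<Longrightarrow> 0 \<le> A x" "\<And>x. x \<subseteq> N \<Longrightarrow> 0 \<le> B x"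
    and "\<And>x. x \<subseteq> N \<Longrightarrow> 0 \<le> C x" "\<And>x. x \<subseteq> N \<Longrightarrow> 0 \<le> D x"
    and "\<And>x y. x \<subseteq> N \<Longrightarrow> y \<subseteq> N \<Longrightarrow> A x * B y \<le> C (x \<union> y) * D (x \<inter> y)"
  shows "(\<Sum>x\<in>Pow N. A x) * (\<Sum>x\<in>Pow N. B x) \<le> (\<Sum>x\<in>Pow N. C x) * (\<Sum>x\<in>Pow N. D x)"
  using assms
proof (induction N arbitrary: A B C D rule: finite_induct)
  case empty
  then show ?case by simp
next
  case (insert n N)
  let ?lift = "\<lambda>F x. F x + F (insert n x)"
  have "(\<Sum>x\<in>Pow N. ?lift A x) * (\<Sum>x\<in>Pow N. ?lift B x)
      \<le> (\<Sum>x\<in>Pow N. ?lift C x) * (\<Sum>x\<in>Pow N. ?lift D x)"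
  proof (rule insert.IH)
    fix x y assume xy: "x \<subseteq> N" "y \<subseteq> N"
    then have "n \<notin> x" "n \<notin> y" using insert.hyps by auto
    then show "?lift A x * ?lift B y \<le> ?lift C (x \<union> y) * ?lift D (x \<inter> y)"
      using insert.prems(5)[of x y] insert.prems(5)[of x "insert n y"]
        insert.prems(5)[of "insert n x" y] insert.prems(5)[of "insert n x" "insert n y"] xy
      by (intro four_functions_base) (auto intro!: insert.prems(1-4))
  qed (auto intro!: add_nonneg_nonneg insert.prems(1-4))
  then show ?case
    using insert.hyps by (simp add: sum_Pow_insert)
qed

section \<open>Averages over Bernoulli percolation\<close>

lemma FKG_latticeI:
  "(\<And>X Y. X \<subseteq> V \<Longrightarrow> Y \<subseteq> V \<Longrightarrow> \<nu> X * \<nu> Y \<le> \<nu> (X \<inter> Y) * \<nu> (X \<union> Y)) \<Longrightarrow> FKG_lattice V \<nu>"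
  unfolding FKG_lattice_def by blast

lemma FKG_latticeD:
  "FKG_lattice V \<nu> \<Longrightarrow> X \<subseteq> V \<Longrightarrow> Y \<subseteq> V \<Longrightarrow> \<nu> X * \<nu> Y \<le> \<nu> (X \<inter> Y) * \<nu> (X \<union> Y)"
  unfolding FKG_lattice_def by blast

definition bernoulli_avg :: "real \<Rightarrow> ('e set \<Rightarrow> real) \<Rightarrow> 'e set \<Rightarrow> real" where
  "bernoulli_avg p h U = (\<Sum>w\<in>Pow U. p ^ card w * (1 - p) ^ card (U - w) * h w)"

lemma bernoulli_avg_nonneg:
  assumes "0 \<le> p" "p \<le> 1" "\<And>w. w \<subseteq> U \<Longrightarrow> 0 \<le> h w"
  shows "0 \<le> bernoulli_avg p h U"
  unfolding bernoulli_avg_def using assms by (intro sum_nonneg mult_nonneg_nonneg) auto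

lemma card_Diff_Un_Int:
  assumes "finite X" "finite Y" "x \<subseteq> X" "y \<subseteq> Y"
  shows "card (X - x) + card (Y - y) = card ((X \<union> Y) - (x \<union> y)) + card ((X \<inter> Y) - (x \<inter> y))"
proof -
  have "finite x" "finite y" using assms finite_subset by blast+
  then have "card (X - x) = card X - card x" "card (Y - y) = card Y - card y"
    "card ((X \<union> Y) - (x \<union> y)) = card (X \<union> Y) - card (x \<union> y)"
    "card ((X \<inter> Y) - (x \<inter> y)) = card (X \<inter> Y) - card (x \<inter> y)"
    using assms by (auto intro!: card_Diff_subset)
  moreover have "card x \<le> card X" "card y \<le> card Y"
    "card (x \<union> y) \<le> card (X \<union> Y)" "card (x \<inter> y) \<le> card (X \<inter> Y)"
    using assms by (intro card_mono; blast)+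
  ultimately show ?thesis
    using assms card_Un_Int[of X Y] card_Un_Int[of x y] \<open>finite x\<close> \<open>finite y\<close> by linarith
qed

definition bernoulli_weight :: "real \<Rightarrow> ('e set \<Rightarrow> real) \<Rightarrow> 'e set \<Rightarrow> 'e set \<Rightarrow> real" where
  "bernoulli_weight p h U w = (if w \<subseteq> U then p ^ card w * (1 - p) ^ card (U - w) * h w else 0)"

lemma bernoulli_avg_eq_sum_weight:
  assumes "finite N" "U \<subseteq> N"
  shows "bernoulli_avg p h U = (\<Sum>w\<in>Pow N. bernoulli_weight p h U w)"
  unfolding bernoulli_avg_def bernoulli_weight_def
  by (rule sum.mono_neutral_cong_left) (use assms in auto)

lemma bernoulli_weight_nonneg:
  "0 \<le> p \<Longrightarrow> p \<le> 1 \<Longrightarrow> (\<And>w. w \<subseteq> U \<Longrightarrow> 0 \<le> h w) \<Longrightarrow> 0 \<le> bernoulli_weight p h U w"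
  unfolding bernoulli_weight_def by auto

lemma bernoulli_weight_four_functions:
  assumes "finite E" "0 \<le> p" "p \<le> 1" "X \<subseteq> E" "Y \<subseteq> E"
    and h_nonneg: "\<And>x. x \<subseteq> E \<Longrightarrow> 0 \<le> h x" and h_fkg: "FKG_lattice E h"
  shows "bernoulli_weight p h X x * bernoulli_weight p h Y y
    \<le> bernoulli_weight p h (X \<union> Y) (x \<union> y) * bernoulli_weight p h (X \<inter> Y) (x \<inter> y)"
proof (cases "x \<subseteq> X \<and> y \<subseteq> Y")
  case False
  then have "bernoulli_weight p h X x * bernoulli_weight p h Y y = 0"
    unfolding bernoulli_weight_def by auto
  moreover have "0 \<le> h w" if "w \<subseteq> X \<union> Y" for w
    using that assms(4,5) h_nonneg by (meson le_supI order_trans)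
  then have "0 \<le> bernoulli_weight p h (X \<union> Y) (x \<union> y) * bernoulli_weight p h (X \<inter> Y) (x \<inter> y)"
    using assms(2,3) by (intro mult_nonneg_nonneg bernoulli_weight_nonneg) auto
  ultimately show ?thesis by linarith
next
  case True
  have fin: "finite X" "finite Y" using assms(1,4,5) finite_subset by blast+
  then have "finite x" "finite y" using True finite_subset by blast+
  then have cards: "card x + card y = card (x \<union> y) + card (x \<inter> y)"
    "card (X - x) + card (Y - y) = card ((X \<union> Y) - (x \<union> y)) + card ((X \<inter> Y) - (x \<inter> y))"
    using True fin by (simp_all add: card_Un_Int[of x y] card_Diff_Un_Int)
  have "x \<subseteq> E" "y \<subseteq> E" using True assms(4,5) by auto
  then have "h x * h y \<le> h (x \<union> y) * h (x \<inter> y)"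
    using FKG_latticeD[OF h_fkg] by (simp add: mult.commute)
  define c where "c = p ^ (card x + card y) * (1 - p) ^ (card (X - x) + card (Y - y))"
  have "bernoulli_weight p h X x * bernoulli_weight p h Y y = c * (h x * h y)"
    using True unfolding bernoulli_weight_def c_def by (simp add: power_add algebra_simps)
  also have "\<dots> \<le> c * (h (x \<union> y) * h (x \<inter> y))"
    using \<open>h x * h y \<le> _\<close> assms unfolding c_def by (intro mult_left_mono) auto
  also have "\<dots> = bernoulli_weight p h (X \<union> Y) (x \<union> y) * bernoulli_weight p h (X \<inter> Y) (x \<inter> y)"
    using True unfolding bernoulli_weight_def c_def cards by (auto simp: power_add algebra_simps)
  finally show ?thesis .
qed

theorem FKG_lattice_bernoulli_avg:
  assumes "finite E" "0 \<le> p" "p \<le> 1"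
    and h_nonneg: "\<And>x. x \<subseteq> E \<Longrightarrow> 0 \<le> h x" and h_fkg: "FKG_lattice E h"
  shows "FKG_lattice E (bernoulli_avg p h)"
proof (rule FKG_latticeI)
  fix X Y assume XY: "X \<subseteq> E" "Y \<subseteq> E"
  have fin: "finite (X \<union> Y)" using assms(1) XY by (meson finite_Un finite_subset)
  moreover have "0 \<le> h w" if "w \<subseteq> X \<union> Y" for w
    using that XY h_nonneg by (meson le_supI order_trans)
  ultimately have "(\<Sum>w\<in>Pow (X \<union> Y). bernoulli_weight p h X w) * (\<Sum>w\<in>Pow (X \<union> Y). bernoulli_weight p h Y w)
      \<le> (\<Sum>w\<in>Pow (X \<union> Y). bernoulli_weight p h (X \<union> Y) w)
        * (\<Sum>w\<in>Pow (X \<union> Y). bernoulli_weight p h (X \<inter> Y) w)"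
    using XY assms by (intro four_functions bernoulli_weight_four_functions bernoulli_weight_nonneg) auto
  moreover have "X \<subseteq> X \<union> Y" "Y \<subseteq> X \<union> Y" "X \<inter> Y \<subseteq> X \<union> Y" by auto
  ultimately show "bernoulli_avg p h X * bernoulli_avg p h Y
      \<le> bernoulli_avg p h (X \<inter> Y) * bernoulli_avg p h (X \<union> Y)"
    by (simp add: bernoulli_avg_eq_sum_weight[OF fin] mult.commute)
qed

lemma bernoulli_avg_insert:
  assumes "finite U" "e \<notin> U"
  shows "bernoulli_avg p h (insert e U)
    = (\<Sum>w\<in>Pow U. p ^ card w * (1 - p) ^ card (U - w) * ((1 - p) * h w + p * h (insert e w)))"
proof -
  have "card (insert e U - w) = Suc (card (U - w))" "card (insert e w) = Suc (card w)"
    "insert e U - insert e w = U - w" if "w \<subseteq> U" for w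
    using that assms finite_subset[OF that] by (auto simp: insert_Diff_if card_insert_if)
  then show ?thesis
    unfolding bernoulli_avg_def using assms
    by (auto simp: sum_Pow_insert algebra_simps intro!: sum.cong)
qed

lemma bernoulli_avg_mono:
  assumes "finite E" "0 \<le> p" "p \<le> 1"
    and h_mono: "\<And>x e. x \<subseteq> E \<Longrightarrow> e \<in> E \<Longrightarrow> h x \<le> h (insert e x)"
    and "U \<subseteq> W" "W \<subseteq> E"
  shows "bernoulli_avg p h U \<le> bernoulli_avg p h W"
proof -
  have step: "bernoulli_avg p h U' \<le> bernoulli_avg p h (insert e U')"
    if "U' \<subseteq> E" "e \<in> E" "e \<notin> U'" for U' e
  proof -
    have "finite U'" using that assms(1) finite_subset by blast
    have "bernoulli_avg p h U'
        = (\<Sum>w\<in>Pow U'. p ^ card w * (1 - p) ^ card (U' - w) * ((1 - p) * h w + p * h w))"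
      unfolding bernoulli_avg_def by (simp add: algebra_simps)
    also have "\<dots> \<le> bernoulli_avg p h (insert e U')"
      unfolding bernoulli_avg_insert[OF \<open>finite U'\<close> \<open>e \<notin> U'\<close>]
      using that assms by (intro sum_mono mult_left_mono add_left_mono) (auto intro!: h_mono)
    finally show ?thesis .
  qed
  have "bernoulli_avg p h U \<le> bernoulli_avg p h (U \<union> C)" if "finite C" "C \<subseteq> W - U" for C
    using that
  proof (induction rule: finite_subset_induct')
    case (insert e C)
    then have "U \<union> C \<subseteq> E" "e \<in> E" "e \<notin> U \<union> C" using assms by auto
    then show ?case using insert.IH step[of "U \<union> C" e] by simp
  qed simp
  moreover have "finite (W - U)" using assms finite_subset by blast
  ultimately have "bernoulli_avg p h U \<le> bernoulli_avg p h (U \<union> (W - U))" by blast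
  also have "U \<union> (W - U) = W" using assms by blast
  finally show ?thesis .
qed

lemma sum_Pow_Un_disjoint:
  assumes "finite U1" "finite U2" "U1 \<inter> U2 = {}"
  shows "(\<Sum>w\<in>Pow (U1 \<union> U2). f w) = (\<Sum>a\<in>Pow U1. \<Sum>b\<in>Pow U2. f (a \<union> b))"
proof -
  have "bij_betw (\<lambda>(a, b). a \<union> b) (Pow U1 \<times> Pow U2) (Pow (U1 \<union> U2))"
    by (rule bij_betwI[where g = "\<lambda>w. (w \<inter> U1, w \<inter> U2)"]) (use assms(3) in auto)
  then show ?thesis
    by (simp add: sum.reindex_bij_betw[symmetric] sum.cartesian_product case_prod_beta)
qed

lemma bernoulli_avg_Un_disjoint:
  assumes "finite U1" "finite U2" "U1 \<inter> U2 = {}"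
    and h_mult: "\<And>a b. a \<subseteq> U1 \<Longrightarrow> b \<subseteq> U2 \<Longrightarrow> h (a \<union> b) * c = h a * h b"
  shows "bernoulli_avg p h (U1 \<union> U2) * c = bernoulli_avg p h U1 * bernoulli_avg p h U2"
proof -
  have "bernoulli_avg p h (U1 \<union> U2) * c = (\<Sum>a\<in>Pow U1. \<Sum>b\<in>Pow U2.
      (p ^ card a * (1 - p) ^ card (U1 - a) * h a) * (p ^ card b * (1 - p) ^ card (U2 - b) * h b))"
    unfolding bernoulli_avg_def sum_Pow_Un_disjoint[OF assms(1-3)] sum_distrib_right
  proof (intro sum.cong refl)
    fix a b assume ab: "a \<in> Pow U1" "b \<in> Pow U2"
    then have "card (a \<union> b) = card a + card b" "(U1 \<union> U2) - (a \<union> b) = (U1 - a) \<union> (U2 - b)"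
      "card ((U1 - a) \<union> (U2 - b)) = card (U1 - a) + card (U2 - b)"
      using assms finite_subset[of a U1] finite_subset[of b U2] by (auto intro!: card_Un_disjoint)
    then show "p ^ card (a \<union> b) * (1 - p) ^ card (U1 \<union> U2 - (a \<union> b)) * h (a \<union> b) * c
        = (p ^ card a * (1 - p) ^ card (U1 - a) * h a) * (p ^ card b * (1 - p) ^ card (U2 - b) * h b)"
      using ab h_mult[of a b] by (simp add: power_add algebra_simps)
  qed
  also have "\<dots> = bernoulli_avg p h U1 * bernoulli_avg p h U2"
    unfolding bernoulli_avg_def by (simp add: sum_product)
  finally show ?thesis .
qed

section \<open>Connected components of spanning subgraphs\<close>

definition edge_rel :: "('e \<Rightarrow> 'v \<times> 'v) \<Rightarrow> 'e set \<Rightarrow> ('v \<times> 'v) set" where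
  "edge_rel en w = {(x, y). \<exists>e\<in>w. en e = (x, y) \<or> en e = (y, x)}"

definition conn_rel :: "'v set \<Rightarrow> ('e \<Rightarrow> 'v \<times> 'v) \<Rightarrow> 'e set \<Rightarrow> ('v \<times> 'v) set" where
  "conn_rel V en w = (edge_rel en w)\<^sup>* \<inter> V \<times> V"

definition ncomponents :: "'v set \<Rightarrow> ('e \<Rightarrow> 'v \<times> 'v) \<Rightarrow> 'e set \<Rightarrow> nat" where
  "ncomponents V en w = card (V // conn_rel V en w)"

lemma sym_edge_rel: "sym (edge_rel en w)"
  unfolding edge_rel_def sym_def by blast

lemma equiv_conn_rel: "equiv V (conn_rel V en w)"
  using sym_rtrancl[OF sym_edge_rel, of en w]
  unfolding equiv_def refl_on_def sym_def trans_def conn_rel_def by (auto intro: rtrancl_trans)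

lemma conn_rel_mono: "w \<subseteq> w' \<Longrightarrow> conn_rel V en w \<subseteq> conn_rel V en w'"
  unfolding conn_rel_def edge_rel_def by (auto elim!: rtrancl_mono[THEN subsetD, rotated])

lemma en_in_conn_rel: "e \<in> w \<Longrightarrow> en e \<in> V \<times> V \<Longrightarrow> en e \<in> conn_rel V en w"
  unfolding conn_rel_def edge_rel_def by (cases "en e") auto

lemma edge_rel_insert:
  "en e = (u, v) \<Longrightarrow> edge_rel en (insert e w) = insert (u, v) (insert (v, u) (edge_rel en w))"
  unfolding edge_rel_def by auto

lemma rtrancl_insert_sym:
  assumes "sym r"
  shows "(insert (u, v) (insert (v, u) r))\<^sup>* = r\<^sup>* \<union> (r\<^sup>* `` {u, v}) \<times> (r\<^sup>* `` {u, v})"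
    (is "?r'\<^sup>* = _ \<union> ?B \<times> ?B")
proof (intro equalityI subrelI)
  have sym_rt: "(y, x) \<in> r\<^sup>*" if "(x, y) \<in> r\<^sup>*" for x y
    using sym_rtrancl[OF assms] that by (auto dest: symD)
  fix x y assume "(x, y) \<in> ?r'\<^sup>*"
  then show "(x, y) \<in> r\<^sup>* \<union> ?B \<times> ?B"
  proof (induction rule: rtrancl_induct)
    case (step y z)
    then show ?case
      by (auto intro: rtrancl_into_rtrancl rtrancl_trans sym_rt)
  qed simp
next
  have sub: "r\<^sup>* \<subseteq> ?r'\<^sup>*" by (rule rtrancl_mono) blast
  have sym_rt: "(y, x) \<in> ?r'\<^sup>*" if "(x, y) \<in> r\<^sup>*" for x y
    using sym_rtrancl[OF assms] that sub by (auto dest: symD)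
  have "(u, v) \<in> ?r'\<^sup>*" "(v, u) \<in> ?r'\<^sup>*" by auto
  then have "(x, u) \<in> ?r'\<^sup>*" "(u, x) \<in> ?r'\<^sup>*" if "x \<in> ?B" for x
    using that sub sym_rt by (auto intro: rtrancl_trans)
  then show "(x, y) \<in> ?r'\<^sup>*" if "(x, y) \<in> r\<^sup>* \<union> ?B \<times> ?B" for x y
    using that sub by (blast intro: rtrancl_trans)
qed

lemma conn_rel_insert:
  assumes "en e = (u, v)" "u \<in> V" "v \<in> V"
  shows "conn_rel V en (insert e w)
    = conn_rel V en w \<union> (conn_rel V en w `` {u, v}) \<times> (conn_rel V en w `` {u, v})"
  unfolding conn_rel_def edge_rel_insert[of en e, OF assms(1)] rtrancl_insert_sym[OF sym_edge_rel]
  using assms(2,3) by blast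

lemma quotient_merge:
  assumes R: "equiv V R" and "u \<in> V" "v \<in> V"
  shows "V // (R \<union> (R `` {u, v}) \<times> (R `` {u, v})) = insert (R `` {u, v}) (V // R - {R `` {u}, R `` {v}})"
proof -
  define B where "B = R `` {u, v}"
  have R_sym: "(x, y) \<in> R \<Longrightarrow> (y, x) \<in> R" and R_trans: "(x, y) \<in> R \<Longrightarrow> (y, z) \<in> R \<Longrightarrow> (x, z) \<in> R"
    for x y z using R unfolding equiv_def sym_def trans_def by blast+
  have B: "B = R `` {u} \<union> R `` {v}" unfolding B_def by blast
  have u_in_B: "u \<in> B" using R assms(2) unfolding B by (auto dest: equiv_class_self)
  have in_B: "x \<in> B \<longleftrightarrow> R `` {x} = R `` {u} \<or> R `` {x} = R `` {v}" if "x \<in> V" for x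
    using that assms(2,3) eq_equiv_class_iff[OF R] R_sym unfolding B by blast
  have "(R \<union> B \<times> B) `` {x} = (if x \<in> B then B else R `` {x})" for x
    unfolding B by (auto intro: R_trans R_sym)
  then have "V // (R \<union> B \<times> B) = (\<lambda>x. if x \<in> B then B else R `` {x}) ` V"
    unfolding quotient_def by auto
  also have "\<dots> = insert B (V // R - {R `` {u}, R `` {v}})"
  proof (intro equalityI subsetI)
    fix Y assume "Y \<in> (\<lambda>x. if x \<in> B then B else R `` {x}) ` V"
    then obtain x where "x \<in> V" "Y = (if x \<in> B then B else R `` {x})" by blast
    then show "Y \<in> insert B (V // R - {R `` {u}, R `` {v}})" using in_B by (auto intro: quotientI)
  next
    fix Y assume Y: "Y \<in> insert B (V // R - {R `` {u}, R `` {v}})"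
    show "Y \<in> (\<lambda>x. if x \<in> B then B else R `` {x}) ` V"
    proof (cases "Y = B")
      case True
      then show ?thesis using u_in_B assms(2) by (auto intro!: image_eqI[of _ _ u])
    next
      case False
      then obtain x where "x \<in> V" "Y = R `` {x}" "Y \<noteq> R `` {u}" "Y \<noteq> R `` {v}"
        using Y by (auto elim!: quotientE)
      then show ?thesis using in_B by (auto intro!: image_eqI[of _ _ x])
    qed
  qed
  finally show ?thesis unfolding B_def .
qed

lemma card_quotient_merge:
  assumes R: "equiv V R" and "finite V" "u \<in> V" "v \<in> V" "(u, v) \<notin> R"
  shows "card (V // (R \<union> (R `` {u, v}) \<times> (R `` {u, v}))) + 1 = card (V // R)"
proof -
  define Rest where "Rest = V // R - {R `` {u}, R `` {v}}"
  have "V // R = insert (R `` {u}) (insert (R `` {v}) Rest)"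
    using assms(3,4) unfolding Rest_def by (auto intro: quotientI)
  moreover have "R `` {u, v} \<notin> V // R"
  proof
    assume "R `` {u, v} \<in> V // R"
    then obtain x where "x \<in> V" "R `` {u, v} = R `` {x}" by (rule quotientE)
    moreover have "u \<in> R `` {u, v}" "v \<in> R `` {u, v}"
      using R assms(3,4) by (auto dest: equiv_class_self)
    ultimately have "(x, u) \<in> R" "(x, v) \<in> R" by auto
    then show False using assms(5) R unfolding equiv_def sym_def trans_def by blast
  qed
  then have "R `` {u, v} \<notin> Rest" "R `` {u} \<notin> insert (R `` {v}) Rest" "R `` {v} \<notin> Rest"
    using eq_equiv_class_iff[OF R] assms(3-5) unfolding Rest_def by auto
  moreover have "finite Rest"
    using R \<open>finite V\<close> unfolding Rest_def equiv_def refl_on_def by (auto intro: finite_quotient)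
  ultimately show ?thesis unfolding quotient_merge[OF R assms(3,4)] Rest_def[symmetric] by simp
qed

lemma ncomponents_insert:
  fixes en :: "'e \<Rightarrow> 'v \<times> 'v"
  assumes "finite V" and en_e: "en e \<in> V \<times> V"
  shows "ncomponents V en (insert e w) + of_bool (en e \<notin> conn_rel V en w) = ncomponents V en w"
proof -
  obtain u v where uv: "en e = (u, v)" "u \<in> V" "v \<in> V" using en_e by auto
  let ?R = "conn_rel V en w"
  show ?thesis
  proof (cases "(u, v) \<in> ?R")
    case True
    then have "?R `` {u, v} \<times> ?R `` {u, v} \<subseteq> ?R"
      using equiv_conn_rel[of V en w] unfolding equiv_def sym_def trans_def by blast
    then show ?thesis
      unfolding ncomponents_def conn_rel_insert[of en e, OF uv] using True uv by (simp add: Un_absorb2)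
  next
    case False
    then show ?thesis
      unfolding ncomponents_def conn_rel_insert[of en e, OF uv]
      using card_quotient_merge[OF equiv_conn_rel \<open>finite V\<close> uv(2,3)] uv by simp
  qed
qed

lemma ncomponents_empty: "ncomponents V en {} = card V"
proof -
  have "V // conn_rel V en {} = (\<lambda>x. {x}) ` V"
    unfolding conn_rel_def edge_rel_def quotient_def by auto
  then show ?thesis unfolding ncomponents_def by (simp add: card_image)
qed

lemma ncomponents_Un_decrease_antimono:
  assumes "finite V" "en ` E \<subseteq> V \<times> V" "X \<subseteq> Y" "Y \<subseteq> E" "finite C" "C \<subseteq> E"
  shows "ncomponents V en Y + ncomponents V en (X \<union> C) \<le> ncomponents V en X + ncomponents V en (Y \<union> C)"
  using assms(5,6)
proof (induction rule: finite_subset_induct)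
  case (insert e C)
  have "en e \<in> V \<times> V" using insert.hyps assms(2) by auto
  have "conn_rel V en (X \<union> C) \<subseteq> conn_rel V en (Y \<union> C)"
    using assms(3) by (intro conn_rel_mono) auto
  then have "of_bool (en e \<notin> conn_rel V en (Y \<union> C)) \<le> (of_bool (en e \<notin> conn_rel V en (X \<union> C)) :: nat)"
    by auto
  moreover note ncomponents_insert[of V en e "X \<union> C", OF assms(1) \<open>en e \<in> V \<times> V\<close>]
    ncomponents_insert[of V en e "Y \<union> C", OF assms(1) \<open>en e \<in> V \<times> V\<close>]
  ultimately show ?case unfolding Un_insert_right using insert.IH by linarith
qed simp

lemma ncomponents_supermodular:
  assumes "finite V" "finite E" "en ` E \<subseteq> V \<times> V" "A \<subseteq> E" "B \<subseteq> E"
  shows "ncomponents V en A + ncomponents V en B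
    \<le> ncomponents V en (A \<union> B) + ncomponents V en (A \<inter> B)"
proof -
  have "ncomponents V en A + ncomponents V en ((A \<inter> B) \<union> B)
      \<le> ncomponents V en (A \<inter> B) + ncomponents V en (A \<union> B)"
    using assms finite_subset[OF assms(5,2)] by (intro ncomponents_Un_decrease_antimono) auto
  moreover have "(A \<inter> B) \<union> B = B" by blast
  ultimately show ?thesis by simp
qed

lemma bij_betw_quotient_PiE:
  assumes R: "equiv V R"
  shows "bij_betw (\<lambda>g. \<lambda>v\<in>V. g (R `` {v})) (V // R \<rightarrow>\<^sub>E Q) {s \<in> V \<rightarrow>\<^sub>E Q. \<forall>(x, y)\<in>R. s x = s y}"
proof -
  have class_of_member: "R `` {y} = X" "y \<in> V" if X: "X \<in> V // R" and "y \<in> X" for X y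
  proof -
    obtain x where x: "X = R `` {x}" "x \<in> V" using X by (rule quotientE)
    then have "(x, y) \<in> R" using \<open>y \<in> X\<close> by simp
    then show "R `` {y} = X" "y \<in> V"
      using equiv_class_eq[OF R] x R unfolding equiv_def refl_on_def by auto
  qed
  have some_in_class: "(SOME x. x \<in> X) \<in> X" if X: "X \<in> V // R" for X
  proof -
    obtain x where "X = R `` {x}" "x \<in> V" using X by (rule quotientE)
    then have "x \<in> X" using equiv_class_self[OF R] by simp
    then show ?thesis by (rule someI)
  qed
  show ?thesis
  proof (rule bij_betwI[where g = "\<lambda>s. \<lambda>X\<in>V // R. s (SOME x. x \<in> X)"])
    have "\<forall>(x, y)\<in>R. R `` {x} = R `` {y} \<and> x \<in> V \<and> y \<in> V"
      using R equiv_class_eq[OF R] unfolding equiv_def refl_on_def by blast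
    then show "(\<lambda>g. \<lambda>v\<in>V. g (R `` {v})) \<in> (V // R \<rightarrow>\<^sub>E Q) \<rightarrow> {s \<in> V \<rightarrow>\<^sub>E Q. \<forall>(x, y)\<in>R. s x = s y}"
      by (auto intro: quotientI)
    show "(\<lambda>s. \<lambda>X\<in>V // R. s (SOME x. x \<in> X)) \<in> {s \<in> V \<rightarrow>\<^sub>E Q. \<forall>(x, y)\<in>R. s x = s y} \<rightarrow> (V // R \<rightarrow>\<^sub>E Q)"
      using some_in_class class_of_member(2) by auto
    show "(\<lambda>X\<in>V // R. (\<lambda>v\<in>V. g (R `` {v})) (SOME x. x \<in> X)) = g" if "g \<in> V // R \<rightarrow>\<^sub>E Q" for g
    proof
      fix X
      show "(\<lambda>X\<in>V // R. (\<lambda>v\<in>V. g (R `` {v})) (SOME x. x \<in> X)) X = g X"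
        using that some_in_class class_of_member by (cases "X \<in> V // R") auto
    qed
    show "(\<lambda>v\<in>V. (\<lambda>X\<in>V // R. s (SOME x. x \<in> X)) (R `` {v})) = s"
      if s: "s \<in> {s \<in> V \<rightarrow>\<^sub>E Q. \<forall>(x, y)\<in>R. s x = s y}" for s
    proof
      fix v
      show "(\<lambda>v\<in>V. (\<lambda>X\<in>V // R. s (SOME x. x \<in> X)) (R `` {v})) v = s v"
      proof (cases "v \<in> V")
        case True
        then have "R `` {v} \<in> V // R" by (rule quotientI)
        then have "(v, SOME x. x \<in> R `` {v}) \<in> R" using some_in_class by blast
        then show ?thesis using s True \<open>R `` {v} \<in> V // R\<close> by auto
      qed (use s in auto)
    qed
  qed
qed

lemma conn_rel_const:
  assumes "\<forall>e\<in>w. s (fst (en e)) = s (snd (en e))" "(x, y) \<in> conn_rel V en w"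
  shows "s x = s y"
proof -
  have "(x, y) \<in> (edge_rel en w)\<^sup>*" using assms(2) unfolding conn_rel_def by blast
  then show ?thesis
    by induction (use assms(1) in \<open>auto simp: edge_rel_def\<close>)
qed

lemma card_edge_constant_colorings:
  assumes "finite V" "en ` w \<subseteq> V \<times> V"
  shows "card {s \<in> V \<rightarrow>\<^sub>E Q. \<forall>e\<in>w. s (fst (en e)) = s (snd (en e))} = card Q ^ ncomponents V en w"
proof -
  have "(\<forall>e\<in>w. s (fst (en e)) = s (snd (en e))) \<longleftrightarrow> (\<forall>(x, y)\<in>conn_rel V en w. s x = s y)" for s
  proof
    assume "\<forall>e\<in>w. s (fst (en e)) = s (snd (en e))"
    then show "\<forall>(x, y)\<in>conn_rel V en w. s x = s y" using conn_rel_const[of w s en _ _ V] by blast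
  next
    assume const: "\<forall>(x, y)\<in>conn_rel V en w. s x = s y"
    show "\<forall>e\<in>w. s (fst (en e)) = s (snd (en e))"
    proof
      fix e assume "e \<in> w"
      then have "en e \<in> conn_rel V en w" using assms(2) by (intro en_in_conn_rel) auto
      then show "s (fst (en e)) = s (snd (en e))" using const by (cases "en e") auto
    qed
  qed
  then have "{s \<in> V \<rightarrow>\<^sub>E Q. \<forall>e\<in>w. s (fst (en e)) = s (snd (en e))}
      = {s \<in> V \<rightarrow>\<^sub>E Q. \<forall>(x, y)\<in>conn_rel V en w. s x = s y}" by blast
  also have "card \<dots> = card (V // conn_rel V en w \<rightarrow>\<^sub>E Q)"
    by (rule bij_betw_same_card[OF bij_betw_quotient_PiE[OF equiv_conn_rel], symmetric])
  also have "\<dots> = card Q ^ ncomponents V en w"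
    using assms(1) equiv_conn_rel[of V en w] unfolding ncomponents_def
    by (simp add: card_PiE finite_quotient equiv_type)
  finally show ?thesis .
qed

lemma prod_of_bool: "finite A \<Longrightarrow> (\<Prod>x\<in>A. of_bool (P x)) = (of_bool (\<forall>x\<in>A. P x) :: 'a :: comm_semiring_1)"
  by (induction rule: finite_induct) auto

lemma fk_expansion:
  fixes x y :: "'e \<Rightarrow> real"
  assumes "finite V" "finite Q" "finite E" "en ` E \<subseteq> V \<times> V"
  shows "(\<Sum>s\<in>V \<rightarrow>\<^sub>E Q. \<Prod>e\<in>E. x e + y e * of_bool (s (fst (en e)) = s (snd (en e))))
       = (\<Sum>w\<in>Pow E. (\<Prod>e\<in>E - w. x e) * (\<Prod>e\<in>w. y e) * real (card Q) ^ ncomponents V en w)"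
proof -
  let ?const = "\<lambda>w s. \<forall>e\<in>w. s (fst (en e)) = s (snd (en e))"
  have fin: "finite (V \<rightarrow>\<^sub>E Q)" using assms(1,2) by (rule finite_PiE)
  have "(\<Sum>s\<in>V \<rightarrow>\<^sub>E Q. \<Prod>e\<in>E. x e + y e * of_bool (s (fst (en e)) = s (snd (en e))))
      = (\<Sum>s\<in>V \<rightarrow>\<^sub>E Q. \<Sum>w\<in>Pow E. (\<Prod>e\<in>E - w. x e) * (\<Prod>e\<in>w. y e) * of_bool (?const w s))"
  proof (rule sum.cong[OF refl])
    fix s
    have "(\<Prod>e\<in>E. x e + y e * of_bool (s (fst (en e)) = s (snd (en e))))
        = (\<Sum>w\<in>Pow E. (\<Prod>e\<in>w. y e * of_bool (s (fst (en e)) = s (snd (en e)))) * (\<Prod>e\<in>E - w. x e))"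
      using prod_add[OF assms(3), of "\<lambda>e. y e * of_bool (s (fst (en e)) = s (snd (en e)))" x]
      by (simp add: add.commute)
    also have "\<dots> = (\<Sum>w\<in>Pow E. (\<Prod>e\<in>E - w. x e) * (\<Prod>e\<in>w. y e) * of_bool (?const w s))"
      using assms(3) by (intro sum.cong refl) (auto simp: prod.distrib prod_of_bool finite_subset)
    finally show "(\<Prod>e\<in>E. x e + y e * of_bool (s (fst (en e)) = s (snd (en e)))) = \<dots>" .
  qed
  also have "\<dots> = (\<Sum>w\<in>Pow E. \<Sum>s\<in>V \<rightarrow>\<^sub>E Q. (\<Prod>e\<in>E - w. x e) * (\<Prod>e\<in>w. y e) * of_bool (?const w s))"
    by (rule sum.swap)
  also have "\<dots> = (\<Sum>w\<in>Pow E. (\<Prod>e\<in>E - w. x e) * (\<Prod>e\<in>w. y e) * real (card Q) ^ ncomponents V en w)"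
  proof (rule sum.cong[OF refl])
    fix w assume "w \<in> Pow E"
    then have "card {s \<in> V \<rightarrow>\<^sub>E Q. ?const w s} = card Q ^ ncomponents V en w"
      using assms(4) by (intro card_edge_constant_colorings[OF assms(1)]) auto
    then show "(\<Sum>s\<in>V \<rightarrow>\<^sub>E Q. (\<Prod>e\<in>E - w. x e) * (\<Prod>e\<in>w. y e) * of_bool (?const w s))
        = (\<Prod>e\<in>E - w. x e) * (\<Prod>e\<in>w. y e) * real (card Q) ^ ncomponents V en w"
      using fin by (simp add: Int_def flip: sum_distrib_left)
  qed
  finally show ?thesis .
qed

definition induced_edges :: "('e \<Rightarrow> 'v \<times> 'v) \<Rightarrow> 'e set \<Rightarrow> 'v set \<Rightarrow> 'e set" where
  "induced_edges en E S = {e\<in>E. fst (en e) \<in> S \<and> snd (en e) \<in> S}"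

lemma induced_edges_subset: "induced_edges en E S \<subseteq> E"
  unfolding induced_edges_def by blast

lemma rtrancl_edge_rel_Un_outside:
  assumes "(x, y) \<in> (edge_rel en (w1 \<union> w2))\<^sup>*" "x \<notin> S"
    and "\<forall>e\<in>w1. fst (en e) \<in> S \<and> snd (en e) \<in> S" "\<forall>e\<in>w2. fst (en e) \<notin> S \<and> snd (en e) \<notin> S"
  shows "(x, y) \<in> (edge_rel en w2)\<^sup>* \<and> y \<notin> S"
  using assms(1)
proof (induction rule: rtrancl_induct)
  case (step y z)
  then obtain e where "e \<in> w1 \<union> w2" "en e = (y, z) \<or> en e = (z, y)" unfolding edge_rel_def by blast
  moreover from this have "e \<in> w2" using step.IH assms(3) by force
  ultimately show ?case
    using step.IH assms(4) by (auto simp: edge_rel_def intro: rtrancl_into_rtrancl)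
qed (use assms(2) in simp)

lemma ncomponents_Un_induced:
  assumes "finite V" "finite E" "en ` E \<subseteq> V \<times> V"
    and "w1 \<subseteq> induced_edges en E S" "w2 \<subseteq> induced_edges en E (V - S)"
  shows "ncomponents V en (w1 \<union> w2) + card V = ncomponents V en w1 + ncomponents V en w2"
proof -
  have "w2 \<subseteq> E" using assms(5) by (auto simp: induced_edges_def)
  then have "finite w2" using assms(2) by (rule finite_subset)
  then show ?thesis
    using assms(5)
  proof (induction rule: finite_induct)
    case empty
    then show ?case by (simp add: ncomponents_empty)
  next
    case (insert e C)
    have "e \<in> E" "fst (en e) \<notin> S" using insert.prems unfolding induced_edges_def by auto
    then have en_e: "en e \<in> V \<times> V" using assms(3) by auto
    have "\<forall>e\<in>w1. fst (en e) \<in> S \<and> snd (en e) \<in> S" "\<forall>e\<in>C. fst (en e) \<notin> S \<and> snd (en e) \<notin> S"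
      using assms(4) insert.prems unfolding induced_edges_def by auto
    then have "en e \<in> conn_rel V en (w1 \<union> C) \<longleftrightarrow> en e \<in> conn_rel V en C"
      using rtrancl_edge_rel_Un_outside[of "fst (en e)" "snd (en e)" en w1 C S] \<open>fst (en e) \<notin> S\<close>
        conn_rel_mono[of C "w1 \<union> C" V en]
      by (cases "en e") (auto simp: conn_rel_def)
    moreover note ncomponents_insert[of V en e "w1 \<union> C", OF assms(1) en_e]
      ncomponents_insert[of V en e C, OF assms(1) en_e]
    moreover have "w1 \<union> insert e C = insert e (w1 \<union> C)" by auto
    ultimately show ?case using insert.IH insert.prems by simp
  qed
qed

definition fk_weight :: "nat \<Rightarrow> 'v set \<Rightarrow> ('e \<Rightarrow> 'v \<times> 'v) \<Rightarrow> 'e set \<Rightarrow> real" where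
  "fk_weight q V en w = real q ^ (card w + ncomponents V en w)"

lemma fk_weight_pos: "1 \<le> q \<Longrightarrow> 0 < fk_weight q V en w"
  unfolding fk_weight_def by simp

lemma fk_weight_mono_insert:
  assumes "finite V" "finite E" "en ` E \<subseteq> V \<times> V" "w \<subseteq> E" "e \<in> E" "1 \<le> q"
  shows "fk_weight q V en w \<le> fk_weight q V en (insert e w)"
proof (cases "e \<in> w")
  case False
  have "en e \<in> V \<times> V" using assms(3,5) by auto
  then have "ncomponents V en w \<le> ncomponents V en (insert e w) + 1"
    using ncomponents_insert[of V en e w, OF assms(1)] by (cases "en e \<in> conn_rel V en w") auto
  moreover have "card (insert e w) = card w + 1"
    using False finite_subset[OF assms(4,2)] by simp
  ultimately show ?thesis unfolding fk_weight_def using assms(6) by (intro power_increasing) auto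
qed (simp add: insert_absorb)

lemma FKG_lattice_fk_weight:
  assumes "finite V" "finite E" "en ` E \<subseteq> V \<times> V" "1 \<le> q"
  shows "FKG_lattice E (fk_weight q V en)"
proof (rule FKG_latticeI)
  fix A B assume "A \<subseteq> E" "B \<subseteq> E"
  then have "card A + card B = card (A \<inter> B) + card (A \<union> B)"
    using assms(2) finite_subset by (metis card_Un_Int add.commute)
  then have "(card A + ncomponents V en A) + (card B + ncomponents V en B)
      \<le> (card (A \<inter> B) + ncomponents V en (A \<inter> B)) + (card (A \<union> B) + ncomponents V en (A \<union> B))"
    using ncomponents_supermodular[OF assms(1-3) \<open>A \<subseteq> E\<close> \<open>B \<subseteq> E\<close>] by linarith
  then show "fk_weight q V en A * fk_weight q V en B
      \<le> fk_weight q V en (A \<inter> B) * fk_weight q V en (A \<union> B)"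
    unfolding fk_weight_def power_add[symmetric] using assms(4) by (intro power_increasing) auto
qed

lemma fk_weight_Un_induced:
  assumes "finite V" "finite E" "en ` E \<subseteq> V \<times> V"
    and "w1 \<subseteq> induced_edges en E S" "w2 \<subseteq> induced_edges en E (V - S)"
  shows "fk_weight q V en (w1 \<union> w2) * real q ^ card V = fk_weight q V en w1 * fk_weight q V en w2"
proof -
  have "w1 \<subseteq> E" "w2 \<subseteq> E" using assms(4,5) by (auto simp: induced_edges_def)
  then have "finite w1" "finite w2" using assms(2) by (auto intro: rev_finite_subset)
  moreover have "w1 \<inter> w2 = {}" using assms(4,5) unfolding induced_edges_def by auto
  ultimately have "card (w1 \<union> w2) = card w1 + card w2" by (simp add: card_Un_disjoint)
  then have "card (w1 \<union> w2) + ncomponents V en (w1 \<union> w2) + card V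
      = (card w1 + ncomponents V en w1) + (card w2 + ncomponents V en w2)"
    using ncomponents_Un_induced[OF assms] by linarith
  then show ?thesis unfolding fk_weight_def power_add[symmetric] by simp
qed

section \<open>Log-supermodularity of the marginal weight\<close>

lemma FKG_lattice_mult:
  assumes "FKG_lattice V f" "FKG_lattice V g"
    and "\<And>S. S \<subseteq> V \<Longrightarrow> 0 \<le> f S" "\<And>S. S \<subseteq> V \<Longrightarrow> 0 \<le> g S"
  shows "FKG_lattice V (\<lambda>S. f S * g S)"
proof (rule FKG_latticeI)
  fix X Y assume XY: "X \<subseteq> V" "Y \<subseteq> V"
  have "X \<inter> Y \<subseteq> V" "X \<union> Y \<subseteq> V" using XY by auto
  have "(f X * g X) * (f Y * g Y) = (f X * f Y) * (g X * g Y)" by simp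
  also have "\<dots> \<le> (f (X \<inter> Y) * f (X \<union> Y)) * (g (X \<inter> Y) * g (X \<union> Y))"
  proof (rule mult_mono)
    show "f X * f Y \<le> f (X \<inter> Y) * f (X \<union> Y)" "g X * g Y \<le> g (X \<inter> Y) * g (X \<union> Y)"
      using XY assms(1,2) by (auto intro: FKG_latticeD)
    show "0 \<le> f (X \<inter> Y) * f (X \<union> Y)" "0 \<le> g X * g Y"
      using XY \<open>X \<inter> Y \<subseteq> V\<close> \<open>X \<union> Y \<subseteq> V\<close> assms(3,4) by simp_all
  qed
  also have "\<dots> = (f (X \<inter> Y) * g (X \<inter> Y)) * (f (X \<union> Y) * g (X \<union> Y))" by simp
  finally show "(f X * g X) * (f Y * g Y) \<le> (f (X \<inter> Y) * g (X \<inter> Y)) * (f (X \<union> Y) * g (X \<union> Y))" .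
qed

lemma FKG_lattice_compl:
  assumes "FKG_lattice V f"
  shows "FKG_lattice V (\<lambda>S. f (V - S))"
proof (rule FKG_latticeI)
  fix X Y assume "X \<subseteq> V" "Y \<subseteq> V"
  have "f (V - X) * f (V - Y) \<le> f ((V - X) \<inter> (V - Y)) * f ((V - X) \<union> (V - Y))"
    using assms by (rule FKG_latticeD) auto
  moreover have "(V - X) \<inter> (V - Y) = V - (X \<union> Y)" "(V - X) \<union> (V - Y) = V - (X \<inter> Y)" by auto
  ultimately show "f (V - X) * f (V - Y) \<le> f (V - (X \<inter> Y)) * f (V - (X \<union> Y))"
    by (simp add: mult.commute)
qed

lemma FKG_lattice_scale:
  assumes "FKG_lattice V f" "\<And>S. S \<subseteq> V \<Longrightarrow> \<nu> S = c * f S"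
  shows "FKG_lattice V \<nu>"
proof (rule FKG_latticeI)
  fix X Y assume XY: "X \<subseteq> V" "Y \<subseteq> V"
  then have "(c * c) * (f X * f Y) \<le> (c * c) * (f (X \<inter> Y) * f (X \<union> Y))"
    using assms(1) by (intro mult_left_mono FKG_latticeD) auto
  then show "\<nu> X * \<nu> Y \<le> \<nu> (X \<inter> Y) * \<nu> (X \<union> Y)"
    using XY by (simp add: assms(2) le_infI1 le_supI algebra_simps)
qed

lemma induced_edges_Int: "induced_edges en E (X \<inter> Y) = induced_edges en E X \<inter> induced_edges en E Y"
  unfolding induced_edges_def by auto

lemma induced_edges_Un: "induced_edges en E X \<union> induced_edges en E Y \<subseteq> induced_edges en E (X \<union> Y)"
  unfolding induced_edges_def by auto

lemma FKG_lattice_power_card_induced_edges: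
  assumes "finite E" "1 \<le> (c :: real)"
  shows "FKG_lattice V (\<lambda>S. c ^ card (induced_edges en E S))"
proof (rule FKG_latticeI)
  fix X Y
  have fin: "finite (induced_edges en E S)" for S
    using assms(1) induced_edges_subset by (rule finite_subset[rotated])
  have "card (induced_edges en E X) + card (induced_edges en E Y)
      = card (induced_edges en E (X \<inter> Y)) + card (induced_edges en E X \<union> induced_edges en E Y)"
    using card_Un_Int[OF fin fin] by (simp add: induced_edges_Int)
  also have "\<dots> \<le> card (induced_edges en E (X \<inter> Y)) + card (induced_edges en E (X \<union> Y))"
    using card_mono[OF fin induced_edges_Un] by simp
  finally show "c ^ card (induced_edges en E X) * c ^ card (induced_edges en E Y)
      \<le> c ^ card (induced_edges en E (X \<inter> Y)) * c ^ card (induced_edges en E (X \<union> Y))"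
    unfolding power_add[symmetric] using assms(2) by (rule power_increasing)
qed

lemma FKG_lattice_bernoulli_avg_induced_edges:
  assumes "finite E" "0 \<le> p" "p \<le> 1"
    and h_nonneg: "\<And>x. x \<subseteq> E \<Longrightarrow> 0 \<le> h x" and h_fkg: "FKG_lattice E h"
    and h_mono: "\<And>x e. x \<subseteq> E \<Longrightarrow> e \<in> E \<Longrightarrow> h x \<le> h (insert e x)"
  shows "FKG_lattice V (\<lambda>S. bernoulli_avg p h (induced_edges en E S))"
proof (rule FKG_latticeI)
  fix X Y
  let ?I = "induced_edges en E"
  have avg_nonneg: "0 \<le> bernoulli_avg p h U" if "U \<subseteq> E" for U
    using assms(2,3) h_nonneg that by (intro bernoulli_avg_nonneg) auto
  have "bernoulli_avg p h (?I X) * bernoulli_avg p h (?I Y)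
      \<le> bernoulli_avg p h (?I X \<inter> ?I Y) * bernoulli_avg p h (?I X \<union> ?I Y)"
    by (rule FKG_latticeD[OF FKG_lattice_bernoulli_avg[OF assms(1-3) h_nonneg h_fkg]
          induced_edges_subset induced_edges_subset])
  also have "\<dots> \<le> bernoulli_avg p h (?I (X \<inter> Y)) * bernoulli_avg p h (?I (X \<union> Y))"
    unfolding induced_edges_Int[symmetric]
    by (intro mult_left_mono bernoulli_avg_mono[OF assms(1-3) h_mono] avg_nonneg)
      (auto simp: induced_edges_def)
  finally show "bernoulli_avg p h (?I X) * bernoulli_avg p h (?I Y)
      \<le> bernoulli_avg p h (?I (X \<inter> Y)) * bernoulli_avg p h (?I (X \<union> Y))" .
qed

definition agreeing_edges :: "('e \<Rightarrow> 'v \<times> 'v) \<Rightarrow> 'e set \<Rightarrow> 'v set \<Rightarrow> 'e set" where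
  "agreeing_edges en E S = {e\<in>E. (fst (en e) \<in> S) = (snd (en e) \<in> S)}"

lemma agreeing_edges_subset: "agreeing_edges en E S \<subseteq> E"
  unfolding agreeing_edges_def by blast

locale fk_marginal =
  fixes V :: "'v set" and E :: "'e set" and en :: "'e \<Rightarrow> 'v \<times> 'v"
    and p :: real and q :: nat and c :: real
  assumes finite_V: "finite V" and finite_E: "finite E" and ends: "en ` E \<subseteq> V \<times> V"
    and p_nonneg: "0 \<le> p" and p_le_1: "p \<le> 1" and q_ge_1: "1 \<le> q" and c_ge_1: "1 \<le> c"
begin

definition half_weight :: "'v set \<Rightarrow> real" where
  "half_weight S = c ^ card (induced_edges en E S) * bernoulli_avg p (fk_weight q V en) (induced_edges en E S)"

definition marginal_weight :: "'v set \<Rightarrow> real" where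
  "marginal_weight S = c ^ card (agreeing_edges en E S) * bernoulli_avg p (fk_weight q V en) (agreeing_edges en E S)"

lemma bernoulli_avg_fk_weight_nonneg: "0 \<le> bernoulli_avg p (fk_weight q V en) U"
  using p_nonneg p_le_1 fk_weight_pos[OF q_ge_1, THEN less_imp_le] by (rule bernoulli_avg_nonneg)

lemma half_weight_nonneg: "0 \<le> half_weight S"
  unfolding half_weight_def using c_ge_1 bernoulli_avg_fk_weight_nonneg by simp

lemma FKG_lattice_half_weight: "FKG_lattice V half_weight"
  unfolding half_weight_def
proof (rule FKG_lattice_mult)
  show "FKG_lattice V (\<lambda>S. c ^ card (induced_edges en E S))"
    using finite_E c_ge_1 by (rule FKG_lattice_power_card_induced_edges)
  show "FKG_lattice V (\<lambda>S. bernoulli_avg p (fk_weight q V en) (induced_edges en E S))"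
    using fk_weight_pos[OF q_ge_1, THEN less_imp_le]
      FKG_lattice_fk_weight[OF finite_V finite_E ends q_ge_1]
      fk_weight_mono_insert[OF finite_V finite_E ends _ _ q_ge_1]
    by (rule FKG_lattice_bernoulli_avg_induced_edges[OF finite_E p_nonneg p_le_1])
qed (use c_ge_1 bernoulli_avg_fk_weight_nonneg in auto)

lemma agreeing_edges_eq:
  "agreeing_edges en E S = induced_edges en E S \<union> induced_edges en E (V - S)"
  "induced_edges en E S \<inter> induced_edges en E (V - S) = {}"
  using ends unfolding agreeing_edges_def induced_edges_def by auto

lemma marginal_weight_factor:
  assumes "S \<subseteq> V"
  shows "marginal_weight S * real q ^ card V = half_weight S * half_weight (V - S)"
proof -
  let ?I1 = "induced_edges en E S" and ?I2 = "induced_edges en E (V - S)"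
  have fin: "finite ?I1" "finite ?I2"
    using finite_subset[OF induced_edges_subset finite_E] by blast+
  have "bernoulli_avg p (fk_weight q V en) (?I1 \<union> ?I2) * real q ^ card V
      = bernoulli_avg p (fk_weight q V en) ?I1 * bernoulli_avg p (fk_weight q V en) ?I2"
    using fin agreeing_edges_eq(2)
    by (rule bernoulli_avg_Un_disjoint) (rule fk_weight_Un_induced[OF finite_V finite_E ends])
  moreover have "card (?I1 \<union> ?I2) = card ?I1 + card ?I2"
    using fin agreeing_edges_eq(2) by (rule card_Un_disjoint)
  ultimately show ?thesis
    unfolding marginal_weight_def half_weight_def agreeing_edges_eq(1) by (simp add: power_add algebra_simps)
qed

theorem FKG_lattice_marginal_weight: "FKG_lattice V marginal_weight"
proof (rule FKG_lattice_scale)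
  show "FKG_lattice V (\<lambda>S. half_weight S * half_weight (V - S))"
    using FKG_lattice_half_weight FKG_lattice_compl[OF FKG_lattice_half_weight] half_weight_nonneg
      half_weight_nonneg
    by (rule FKG_lattice_mult)
  show "marginal_weight S = (1 / real q ^ card V) * (half_weight S * half_weight (V - S))"
    if "S \<subseteq> V" for S
    using marginal_weight_factor[OF that] q_ge_1 by (simp add: field_simps)
qed

end

section \<open>Planar duality\<close>

lemma even_card_involution:
  assumes "finite A" "\<And>x. x \<in> A \<Longrightarrow> f x \<in> A \<and> f x \<noteq> x \<and> f (f x) = x"
  shows "even (card A)"
proof -
  let ?C = "(\<lambda>x. {x, f x}) ` A"
  have "2 * card ?C = card (\<Union>?C)"
  proof (rule card_partition)
    show "finite ?C" "finite (\<Union>?C)" using assms by auto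
    show "card c = 2" if "c \<in> ?C" for c
    proof -
      obtain x where "x \<in> A" "c = {x, f x}" using \<open>c \<in> ?C\<close> by blast
      then show ?thesis using assms(2)[OF \<open>x \<in> A\<close>] by auto
    qed
    have pair_eq: "{x, f x} = {z, f z}" if "x \<in> A" "z \<in> {x, f x}" for x z
      using that assms(2)[OF \<open>x \<in> A\<close>] by auto
    show "c1 \<inter> c2 = {}" if c: "c1 \<in> ?C" "c2 \<in> ?C" "c1 \<noteq> c2" for c1 c2
      using c pair_eq by blast
  qed
  moreover have "\<Union>?C = A" using assms(2) by auto
  ultimately show ?thesis by (metis dvd_triv_left)
qed

lemma even_card_change_along_bij:
  fixes P :: "'a \<Rightarrow> bool"
  assumes "finite A" "bij_betw g A A"
  shows "even (card {x\<in>A. P x \<noteq> P (g x)})"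
proof -
  have "(\<Sum>x\<in>A. of_bool (P (g x)) :: nat) = (\<Sum>x\<in>A. of_bool (P x))"
    using assms(2) by (rule sum.reindex_bij_betw)
  then have "even (\<Sum>x\<in>A. of_bool (P x) + of_bool (P (g x)) :: nat)"
    by (simp add: sum.distrib)
  then have "even (card {x\<in>A. odd (of_bool (P x) + of_bool (P (g x)) :: nat)})"
    by (simp only: even_sum_iff[OF assms(1)])
  moreover have "{x\<in>A. odd (of_bool (P x) + of_bool (P (g x)) :: nat)} = {x\<in>A. P x \<noteq> P (g x)}"
    by auto
  ultimately show ?thesis by simp
qed

lemma equiv_Image_iff: "equiv A R \<Longrightarrow> (a, b) \<in> R \<Longrightarrow> a \<in> R `` {c} \<longleftrightarrow> b \<in> R `` {c}"
  unfolding equiv_def sym_def trans_def by blast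

lemma ncomponents_eq_1:
  assumes "V \<noteq> {}" "conn_rel V en w = V \<times> V"
  shows "ncomponents V en w = 1"
proof -
  have "V // (V \<times> V) = {V}" using assms(1) unfolding quotient_def by auto
  then show ?thesis unfolding ncomponents_def assms(2) by simp
qed

lemma orb_eq_orbit: "permutation f \<Longrightarrow> orb f x = orbit f x"
  unfolding orb_def by (simp add: orbit_altdef_permutation)

locale plane_map =
  fixes D :: "'d set" and alpha rot :: "'d \<Rightarrow> 'd"
  assumes planar: "planar_map D alpha rot"
begin

abbreviation "verts \<equiv> Verts D rot"
abbreviation "faces \<equiv> Faces D alpha rot"
abbreviation "edges \<equiv> Edges D alpha"

lemma finite_D: "finite D" and alpha_permutes: "alpha permutes D" and rot_permutes: "rot permutes D"
  and alpha_no_fixpoint: "\<And>d. d \<in> D \<Longrightarrow> alpha d \<noteq> d" and alpha_alpha: "\<And>d. d \<in> D \<Longrightarrow> alpha (alpha d) = d"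
  using planar unfolding planar_map_def comb_map_def by auto

lemma alpha_in_D: "d \<in> D \<Longrightarrow> alpha d \<in> D"
  using alpha_permutes by (simp add: permutes_in_image)

lemma rot_in_D: "d \<in> D \<Longrightarrow> rot d \<in> D"
  using rot_permutes by (simp add: permutes_in_image)

lemma vtx_rot: "vtx rot (rot x) = vtx rot x"
  unfolding vtx_def orb_eq_orbit[OF permutes_imp_permutation[OF finite_D rot_permutes]]
  by (rule permutation_orbit_step[OF permutes_imp_permutation[OF finite_D rot_permutes]])

text \<open>Faces are the orbits of rot \<circ> alpha, and rot x = (rot \<circ> alpha) (alpha x).\<close>
lemma fce_rot: "fce alpha rot (rot x) = fce alpha rot (alpha x)"
proof -
  have perm: "permutation (rot \<circ> alpha)"
    using finite_D alpha_permutes rot_permutes by (intro permutes_imp_permutation permutes_compose)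
  have "alpha (alpha x) = x"
    using alpha_alpha alpha_permutes by (cases "x \<in> D") (auto simp: permutes_not_in)
  then have "fce alpha rot (rot x) = fce alpha rot ((rot \<circ> alpha) (alpha x))" by simp
  also have "\<dots> = fce alpha rot (alpha x)"
    unfolding fce_def orb_eq_orbit[OF perm] by (rule permutation_orbit_step[OF perm])
  finally show ?thesis .
qed

definition edge_dart :: "'d set \<Rightarrow> 'd" where
  "edge_dart e = (SOME d. d \<in> D \<and> e = {d, alpha d})"

definition vtx_ends :: "'d set \<Rightarrow> 'd set \<times> 'd set" where
  "vtx_ends e = (vtx rot (edge_dart e), vtx rot (alpha (edge_dart e)))"

definition fce_ends :: "'d set \<Rightarrow> 'd set \<times> 'd set" where
  "fce_ends e = (fce alpha rot (edge_dart e), fce alpha rot (alpha (edge_dart e)))"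

lemma edge_dart: "e \<in> edges \<Longrightarrow> edge_dart e \<in> D \<and> e = {edge_dart e, alpha (edge_dart e)}"
  unfolding edge_dart_def Edges_def by (rule someI_ex) blast

lemma edge_in_edges: "d \<in> D \<Longrightarrow> {d, alpha d} \<in> edges"
  unfolding Edges_def by blast

lemma edge_dart_cases: "d \<in> D \<Longrightarrow> edge_dart {d, alpha d} = d \<or> edge_dart {d, alpha d} = alpha d"
  using edge_dart[OF edge_in_edges] by (metis doubleton_eq_iff)

lemma vtx_ends_edge:
  "d \<in> D \<Longrightarrow> vtx_ends {d, alpha d} = (vtx rot d, vtx rot (alpha d))
    \<or> vtx_ends {d, alpha d} = (vtx rot (alpha d), vtx rot d)"
  using edge_dart_cases alpha_alpha unfolding vtx_ends_def by metis

lemma fce_ends_edge: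
  "d \<in> D \<Longrightarrow> fce_ends {d, alpha d} = (fce alpha rot d, fce alpha rot (alpha d))
    \<or> fce_ends {d, alpha d} = (fce alpha rot (alpha d), fce alpha rot d)"
  using edge_dart_cases alpha_alpha unfolding fce_ends_def by metis

lemma finite_verts: "finite verts" and finite_faces: "finite faces" and finite_edges: "finite edges"
  unfolding Verts_def Faces_def Edges_def using finite_D by simp_all

lemma vtx_ends_in: "vtx_ends ` edges \<subseteq> verts \<times> verts"
  unfolding vtx_ends_def Verts_def using edge_dart alpha_in_D by auto

lemma fce_ends_in: "fce_ends ` edges \<subseteq> faces \<times> faces"
  unfolding fce_ends_def Faces_def using edge_dart alpha_in_D by auto

lemma vtx_in_verts: "d \<in> D \<Longrightarrow> vtx rot d \<in> verts" unfolding Verts_def by blast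

lemma fce_in_faces: "d \<in> D \<Longrightarrow> fce alpha rot d \<in> faces" unfolding Faces_def by blast

lemma vtx_edge_in_conn_rel:
  "d \<in> D \<Longrightarrow> {d, alpha d} \<in> w \<Longrightarrow> (vtx rot d, vtx rot (alpha d)) \<in> conn_rel verts vtx_ends w"
  using vtx_ends_edge[of d] alpha_in_D vtx_in_verts
  unfolding conn_rel_def edge_rel_def by blast

lemma fce_edge_in_conn_rel:
  "d \<in> D \<Longrightarrow> {d, alpha d} \<in> w \<Longrightarrow> (fce alpha rot d, fce alpha rot (alpha d)) \<in> conn_rel faces fce_ends w"
  using fce_ends_edge[of d] alpha_in_D fce_in_faces
  unfolding conn_rel_def edge_rel_def by blast

lemma vtx_alpha_same_component:
  assumes "d \<in> D" "{d, alpha d} \<in> w"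
  shows "vtx rot d \<in> conn_rel verts vtx_ends w `` {v} \<longleftrightarrow> vtx rot (alpha d) \<in> conn_rel verts vtx_ends w `` {v}"
  by (rule equiv_Image_iff[OF equiv_conn_rel vtx_edge_in_conn_rel[OF assms]])

lemma fce_alpha_same_component:
  assumes "d \<in> D" "{d, alpha d} \<in> w"
  shows "fce alpha rot d \<in> conn_rel faces fce_ends w `` {\<phi>}
    \<longleftrightarrow> fce alpha rot (alpha d) \<in> conn_rel faces fce_ends w `` {\<phi>}"
  by (rule equiv_Image_iff[OF equiv_conn_rel fce_edge_in_conn_rel[OF assms]])

lemma D_ne: "D \<noteq> {}"
  using planar unfolding planar_map_def comb_map_def by auto

lemma dart_connected:
  assumes "d \<in> D" "d' \<in> D"
  shows "(d, d') \<in> ({(x, alpha x) | x. x \<in> D} \<union> {(x, rot x) | x. x \<in> D})\<^sup>*"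
  using planar assms unfolding planar_map_def map_connected_def by blast

lemma conn_rel_verts_full: "conn_rel verts vtx_ends edges = verts \<times> verts"
proof -
  have "(vtx rot d, vtx rot d') \<in> conn_rel verts vtx_ends edges" if "d \<in> D" "d' \<in> D" for d d'
    using dart_connected[OF that] that(1)
  proof (induction rule: rtrancl_induct)
    case base
    then show ?case using equiv_conn_rel[of verts vtx_ends edges] vtx_in_verts
      unfolding equiv_def refl_on_def by blast
  next
    case (step y z)
    then consider "y \<in> D" "z = alpha y" | "z = rot y" by blast
    then show ?case
    proof cases
      case 1
      then have "(vtx rot y, vtx rot z) \<in> conn_rel verts vtx_ends edges"
        using vtx_edge_in_conn_rel edge_in_edges by blast
      then show ?thesis
        using step.IH step.prems equiv_conn_rel[of verts vtx_ends edges] unfolding equiv_def trans_def by blast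
    qed (use step.IH step.prems vtx_rot in simp)
  qed
  then show ?thesis unfolding conn_rel_def Verts_def by blast
qed

lemma conn_rel_faces_full: "conn_rel faces fce_ends edges = faces \<times> faces"
proof -
  let ?R = "conn_rel faces fce_ends edges"
  have R_trans: "(a, b) \<in> ?R \<Longrightarrow> (b, c) \<in> ?R \<Longrightarrow> (a, c) \<in> ?R" for a b c
    using equiv_conn_rel[of faces fce_ends edges] unfolding equiv_def trans_def by blast
  have alpha_step: "(fce alpha rot y, fce alpha rot (alpha y)) \<in> ?R" if "y \<in> D" for y
    using fce_edge_in_conn_rel edge_in_edges that by blast
  have "(fce alpha rot d, fce alpha rot d') \<in> ?R" if "d \<in> D" "d' \<in> D" for d d'
    using dart_connected[OF that] that(1)
  proof (induction rule: rtrancl_induct)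
    case base
    then show ?case using equiv_conn_rel[of faces fce_ends edges] fce_in_faces
      unfolding equiv_def refl_on_def by blast
  next
    case (step y z)
    then have "y \<in> D" "z = alpha y \<or> z = rot y" by auto
    then show ?case using step.IH step.prems R_trans alpha_step fce_rot by metis
  qed
  then show ?thesis unfolding conn_rel_def Faces_def by blast
qed

lemma ncomponents_verts_edges: "ncomponents verts vtx_ends edges = 1"
  using D_ne by (intro ncomponents_eq_1 conn_rel_verts_full) (auto simp: Verts_def)

lemma ncomponents_faces_edges: "ncomponents faces fce_ends edges = 1"
  using D_ne by (intro ncomponents_eq_1 conn_rel_faces_full) (auto simp: Faces_def)

lemma euler: "int (card verts) - int (card edges) + int (card faces) = 2"
  using planar unfolding planar_map_def genus_zero_def by blast

text \<open>Since the face of alpha x is that of the next dart rot x around the same vertex, going once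
  around each vertex of K the face of the current dart enters and leaves \<Phi> equally often.\<close>
lemma even_card_separating_darts:
  "even (card {x\<in>D. vtx rot x \<in> K \<and> (fce alpha rot x \<in> \<Phi>) \<noteq> (fce alpha rot (alpha x) \<in> \<Phi>)})"
proof -
  let ?A = "{x\<in>D. vtx rot x \<in> K}"
  have "finite ?A" using finite_D by simp
  moreover have "bij_betw rot ?A ?A"
  proof -
    have "inj_on rot ?A" using permutes_inj[OF rot_permutes] by (rule inj_on_subset) simp
    moreover have "rot ` ?A \<subseteq> ?A" using rot_in_D vtx_rot by auto
    ultimately show ?thesis using \<open>finite ?A\<close> by (simp add: bij_betw_def endo_inj_surj)
  qed
  ultimately have "even (card {x\<in>?A. (fce alpha rot x \<in> \<Phi>) \<noteq> (fce alpha rot (rot x) \<in> \<Phi>)})"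
    by (rule even_card_change_along_bij)
  then show ?thesis by (simp add: fce_rot conj_assoc)
qed

text \<open>If neither holds, take the primal component K in \<rho> of one end of e and the dual component \<Phi> of
  the face on one side of e.  The darts at K separating \<Phi> from its complement lie on edges of
  \<rho> \<union> {e}; alpha pairs them off except for the dart of e itself, yet their number is even.\<close>
lemma primal_or_dual_connected:
  assumes "\<rho> \<subseteq> edges" "e \<in> edges" "e \<notin> \<rho>"
  shows "vtx_ends e \<in> conn_rel verts vtx_ends \<rho> \<or> fce_ends e \<in> conn_rel faces fce_ends (edges - insert e \<rho>)"
proof (rule ccontr)
  define r where "r = edge_dart e"
  have r: "r \<in> D" "e = {r, alpha r}" using edge_dart[OF assms(2)] unfolding r_def by auto
  define K where "K = conn_rel verts vtx_ends \<rho> `` {vtx rot r}"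
  define \<Phi> where "\<Phi> = conn_rel faces fce_ends (edges - insert e \<rho>) `` {fce alpha rot r}"
  define T where "T = {x\<in>D. vtx rot x \<in> K \<and> (fce alpha rot x \<in> \<Phi>) \<noteq> (fce alpha rot (alpha x) \<in> \<Phi>)}"
  assume "\<not> ?thesis"
  then have "vtx rot (alpha r) \<notin> K" "fce alpha rot (alpha r) \<notin> \<Phi>"
    unfolding K_def \<Phi>_def vtx_ends_def fce_ends_def r_def by auto
  moreover have "vtx rot r \<in> K" "fce alpha rot r \<in> \<Phi>"
    unfolding K_def \<Phi>_def
    using equiv_class_self[OF equiv_conn_rel vtx_in_verts[OF r(1)]]
      equiv_class_self[OF equiv_conn_rel fce_in_faces[OF r(1)]] by auto
  ultimately have "r \<in> T" "alpha r \<notin> T" using r(1) unfolding T_def by auto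
  have "finite T" using finite_D unfolding T_def by simp
  have "even (card (T - {r}))"
  proof (rule even_card_involution)
    show "finite (T - {r})" using \<open>finite T\<close> by simp
    fix x assume x: "x \<in> T - {r}"
    then have "x \<in> D" "x \<noteq> alpha r" using \<open>alpha r \<notin> T\<close> unfolding T_def by auto
    have "{x, alpha x} \<in> insert e \<rho>"
    proof (rule ccontr)
      assume "{x, alpha x} \<notin> insert e \<rho>"
      then have "{x, alpha x} \<in> edges - insert e \<rho>" using edge_in_edges \<open>x \<in> D\<close> by blast
      then have "fce alpha rot x \<in> \<Phi> \<longleftrightarrow> fce alpha rot (alpha x) \<in> \<Phi>"
        unfolding \<Phi>_def by (rule fce_alpha_same_component[OF \<open>x \<in> D\<close>])
      then show False using x unfolding T_def by simp
    qed
    moreover have "{x, alpha x} \<noteq> e" using r x \<open>x \<noteq> alpha r\<close> by (auto simp: doubleton_eq_iff)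
    ultimately have "{x, alpha x} \<in> \<rho>" by blast
    then have "vtx rot x \<in> K \<longleftrightarrow> vtx rot (alpha x) \<in> K"
      unfolding K_def by (rule vtx_alpha_same_component[OF \<open>x \<in> D\<close>])
    then have "vtx rot (alpha x) \<in> K" using x unfolding T_def by simp
    moreover have "alpha x \<noteq> r" using \<open>x \<noteq> alpha r\<close> alpha_alpha[OF \<open>x \<in> D\<close>] by auto
    ultimately show "alpha x \<in> T - {r} \<and> alpha x \<noteq> x \<and> alpha (alpha x) = x"
      using x alpha_in_D alpha_alpha alpha_no_fixpoint unfolding T_def by auto
  qed
  moreover have "card T = card (T - {r}) + 1"
    using card_Suc_Diff1[OF \<open>finite T\<close> \<open>r \<in> T\<close>] by simp
  ultimately show False using even_card_separating_darts[of K \<Phi>] unfolding T_def by simp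
qed

definition duality_defect :: "'d set set \<Rightarrow> int" where
  "duality_defect \<rho> = int (card \<rho>) + int (ncomponents verts vtx_ends \<rho>) + 1
     - int (ncomponents faces fce_ends (edges - \<rho>)) - int (card verts)"

lemma duality_defect_insert:
  assumes "\<rho> \<subseteq> edges" "e \<in> edges" "e \<notin> \<rho>"
  shows "duality_defect \<rho> \<le> duality_defect (insert e \<rho>)"
proof -
  have "ncomponents verts vtx_ends (insert e \<rho>) + of_bool (vtx_ends e \<notin> conn_rel verts vtx_ends \<rho>)
      = ncomponents verts vtx_ends \<rho>"
    using vtx_ends_in assms(2) by (intro ncomponents_insert finite_verts) auto
  moreover have "ncomponents faces fce_ends (insert e (edges - insert e \<rho>))
      + of_bool (fce_ends e \<notin> conn_rel faces fce_ends (edges - insert e \<rho>))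
      = ncomponents faces fce_ends (edges - insert e \<rho>)"
    using fce_ends_in assms(2) by (intro ncomponents_insert finite_faces) auto
  moreover have "insert e (edges - insert e \<rho>) = edges - \<rho>" using assms(2,3) by auto
  moreover have "card (insert e \<rho>) = card \<rho> + 1"
    using assms finite_subset[OF assms(1) finite_edges] by simp
  ultimately show ?thesis
    using primal_or_dual_connected[OF assms] unfolding duality_defect_def by (auto simp: of_bool_def split: if_splits)
qed

theorem planar_duality:
  assumes "\<rho> \<subseteq> edges"
  shows "ncomponents faces fce_ends (edges - \<rho>) + card verts = card \<rho> + ncomponents verts vtx_ends \<rho> + 1"
proof -
  have mono: "duality_defect \<rho>1 \<le> duality_defect (\<rho>1 \<union> C)"
    if "\<rho>1 \<subseteq> edges" "C \<subseteq> edges" for \<rho>1 C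
  proof -
    have "finite C" using that(2) finite_edges by (rule finite_subset)
    then show ?thesis using that(2)
    proof (induction rule: finite_subset_induct')
      case (insert e C)
      then show ?case
        using duality_defect_insert[of "\<rho>1 \<union> C" e] that(1) by (cases "e \<in> \<rho>1") (auto simp: insert_absorb)
    qed simp
  qed
  have "duality_defect {} = 0"
    unfolding duality_defect_def by (simp add: ncomponents_empty ncomponents_faces_edges)
  moreover have "duality_defect edges = 0"
    using euler unfolding duality_defect_def by (simp add: ncomponents_empty ncomponents_verts_edges)
  moreover have "duality_defect {} \<le> duality_defect \<rho>" "duality_defect \<rho> \<le> duality_defect edges"
    using mono[of "{}" \<rho>] mono[of \<rho> "edges - \<rho>"] assms by (auto simp: Un_absorb1)
  ultimately show ?thesis unfolding duality_defect_def by linarith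
qed

end

section \<open>The marginals of the two models\<close>

lemma sum_Pow_Diff: "(\<Sum>w\<in>Pow E. g w) = (\<Sum>r\<in>Pow E. g (E - r))"
  by (rule sum.reindex_bij_witness[where i = "\<lambda>r. E - r" and j = "\<lambda>r. E - r"]) (auto simp: double_diff)

lemma sum_Pow_restrict:
  fixes c y :: real
  assumes "finite E" "A \<subseteq> E"
  shows "(\<Sum>w\<in>Pow E. (\<Prod>e\<in>E - w. if e \<in> A then c else 1) * (\<Prod>e\<in>w. if e \<in> A then y else 0) * g w)
       = (\<Sum>w\<in>Pow A. c ^ card (A - w) * y ^ card w * g w)"
proof -
  have "(\<Prod>e\<in>w. if e \<in> A then y else 0) = 0" if "w \<in> Pow E - Pow A" for w
  proof (rule prod_zero)
    show "finite w" using that finite_subset[of w E] assms(1) by auto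
    show "\<exists>e\<in>w. (if e \<in> A then y else 0) = 0" using that by auto
  qed
  then have "(\<Sum>w\<in>Pow E. (\<Prod>e\<in>E - w. if e \<in> A then c else 1) * (\<Prod>e\<in>w. if e \<in> A then y else 0) * g w)
      = (\<Sum>w\<in>Pow A. (\<Prod>e\<in>E - w. if e \<in> A then c else 1) * (\<Prod>e\<in>w. if e \<in> A then y else 0) * g w)"
    using assms by (intro sum.mono_neutral_cong_right) auto
  also have "\<dots> = (\<Sum>w\<in>Pow A. c ^ card (A - w) * y ^ card w * g w)"
  proof (rule sum.cong[OF refl])
    fix w assume "w \<in> Pow A"
    then have "(E - w) \<inter> {e. e \<in> A} = A - w" "(\<Prod>e\<in>w. if e \<in> A then y else 0) = y ^ card w"
      using assms(2) by (auto simp: subset_iff)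
    moreover have "(\<Prod>e\<in>E - w. if e \<in> A then c else 1)
        = (\<Prod>e\<in>(E - w) \<inter> {e. e \<in> A}. c) * (\<Prod>e\<in>(E - w) \<inter> - {e. e \<in> A}. 1)"
      using assms(1) by (simp add: prod.If_cases)
    ultimately show "(\<Prod>e\<in>E - w. if e \<in> A then c else 1) * (\<Prod>e\<in>w. if e \<in> A then y else 0) * g w
        = c ^ card (A - w) * y ^ card w * g w" by simp
  qed
  finally show ?thesis .
qed

locale planar_model = plane_map D alpha rot for D :: "'d set" and alpha rot +
  fixes Q Q' :: "complex set" and a b :: real and f :: "complex \<Rightarrow> nat"
  assumes finite_Q': "finite Q'" and card_Q': "1 \<le> card Q'"
    and a_pos: "0 < a" and a_lt_1: "a < 1" and b_pos: "0 < b" and b_le_1: "b \<le> 1"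
    and f_bij: "bij_betw f Q {0, 1}"
begin

sublocale fk_marginal verts edges vtx_ends a "card Q'" "1 / b"
  using finite_verts finite_edges vtx_ends_in a_pos a_lt_1 b_pos b_le_1 card_Q'
  by unfold_locales auto

abbreviation "cfg \<xi> \<equiv> config_of f Q verts \<xi>"
abbreviation "agree \<xi> \<equiv> agreeing_edges vtx_ends edges \<xi>"

lemma inv_into_f_01: "n \<in> {0, 1} \<Longrightarrow> inv_into Q f n \<in> Q \<and> f (inv_into Q f n) = n"
  using f_bij unfolding bij_betw_def by (simp add: inv_into_into f_inv_into_f)

lemma cfg_PiE: "cfg \<xi> \<in> verts \<rightarrow>\<^sub>E Q"
  unfolding config_of_def using inv_into_f_01 by auto

lemma cfg_eq_iff:
  assumes "v1 \<in> verts" "v2 \<in> verts"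
  shows "cfg \<xi> v1 = cfg \<xi> v2 \<longleftrightarrow> (v1 \<in> \<xi> \<longleftrightarrow> v2 \<in> \<xi>)"
proof -
  have "f (inv_into Q f 1) \<noteq> f (inv_into Q f 0)" using inv_into_f_01[of 0] inv_into_f_01[of 1] by simp
  then have "inv_into Q f 1 \<noteq> inv_into Q f 0" by auto
  then show ?thesis unfolding config_of_def using assms by auto
qed

lemma cfg_agree_iff:
  assumes "e \<in> edges"
  shows "cfg \<xi> (fst (vtx_ends e)) = cfg \<xi> (snd (vtx_ends e)) \<longleftrightarrow> e \<in> agree \<xi>"
proof -
  have "vtx_ends e \<in> verts \<times> verts" using vtx_ends_in assms by blast
  then show ?thesis using assms cfg_eq_iff unfolding agreeing_edges_def by (simp add: mem_Times_iff)
qed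

lemma eta_primal_eq: "eta_primal D alpha rot s = {e\<in>edges. s (fst (vtx_ends e)) \<noteq> s (snd (vtx_ends e))}"
proof (intro equalityI subsetI)
  fix e assume "e \<in> eta_primal D alpha rot s"
  then obtain d where "e = {d, alpha d}" "d \<in> D" "s (vtx rot d) \<noteq> s (vtx rot (alpha d))"
    unfolding eta_primal_def by blast
  then show "e \<in> {e\<in>edges. s (fst (vtx_ends e)) \<noteq> s (snd (vtx_ends e))}"
    using vtx_ends_edge edge_in_edges by force
next
  fix e assume "e \<in> {e\<in>edges. s (fst (vtx_ends e)) \<noteq> s (snd (vtx_ends e))}"
  then show "e \<in> eta_primal D alpha rot s"
    using edge_dart unfolding eta_primal_def vtx_ends_def by force
qed

lemma eta_dual_eq: "eta_dual D alpha rot s = {e\<in>edges. s (fst (fce_ends e)) \<noteq> s (snd (fce_ends e))}"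
proof (intro equalityI subsetI)
  fix e assume "e \<in> eta_dual D alpha rot s"
  then obtain d where "e = {d, alpha d}" "d \<in> D" "s (fce alpha rot d) \<noteq> s (fce alpha rot (alpha d))"
    unfolding eta_dual_def by blast
  then show "e \<in> {e\<in>edges. s (fst (fce_ends e)) \<noteq> s (snd (fce_ends e))}"
    using fce_ends_edge edge_in_edges by force
next
  fix e assume "e \<in> {e\<in>edges. s (fst (fce_ends e)) \<noteq> s (snd (fce_ends e))}"
  then show "e \<in> eta_dual D alpha rot s"
    using edge_dart unfolding eta_dual_def fce_ends_def by force
qed

lemma eta_primal_cfg: "eta_primal D alpha rot (cfg \<xi>) = edges - agree \<xi>"
  unfolding eta_primal_eq using cfg_agree_iff by auto

lemma exp_edge_factor:
  assumes "t = 0 \<or> t = 1"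
  shows "exp (alpha_par a b + beta_par (card Q') a * t) = (1 - a) / b + (real (card Q') * a / b) * t"
proof -
  have exp_alpha: "exp (alpha_par a b) = (1 - a) / b"
    unfolding alpha_par_def using a_lt_1 b_pos by simp
  have "0 < 1 + real (card Q') * a / (1 - a)" using a_pos a_lt_1 by (simp add: add_pos_nonneg)
  then have "exp (beta_par (card Q') a) = 1 + real (card Q') * a / (1 - a)"
    unfolding beta_par_def by simp
  then have "exp (alpha_par a b + beta_par (card Q') a) = (1 - a) / b * (1 + real (card Q') * a / (1 - a))"
    using exp_alpha by (simp add: exp_add)
  also have "\<dots> = (1 - a) / b + real (card Q') * a / b"
    using a_lt_1 b_pos by (simp add: field_simps)
  finally show ?thesis using assms exp_alpha by auto
qed

lemma mu_weight_cfg: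
  "mu_weight D alpha rot (card Q') a b (cfg \<xi>) s' =
    (\<Prod>e\<in>edges. (if e \<in> agree \<xi> then (1 - a) / b else 1)
       + (if e \<in> agree \<xi> then real (card Q') * a / b else 0)
         * of_bool (s' (fst (vtx_ends e)) = s' (snd (vtx_ends e))))"
proof -
  let ?term = "\<lambda>e. kdelta (cfg \<xi> (fst (vtx_ends e))) (cfg \<xi> (snd (vtx_ends e))) *
        (alpha_par a b + beta_par (card Q') a * kdelta (s' (fst (vtx_ends e))) (s' (snd (vtx_ends e))))"
  have "mu_weight D alpha rot (card Q') a b (cfg \<xi>) s' = exp (\<Sum>e\<in>edges. ?term e)"
    unfolding mu_weight_def Let_def vtx_ends_def edge_dart_def by simp
  also have "\<dots> = (\<Prod>e\<in>edges. exp (?term e))"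
    using finite_edges by (rule exp_sum)
  also have "\<dots> = (\<Prod>e\<in>edges. (if e \<in> agree \<xi> then (1 - a) / b else 1)
       + (if e \<in> agree \<xi> then real (card Q') * a / b else 0)
         * of_bool (s' (fst (vtx_ends e)) = s' (snd (vtx_ends e))))"
  proof (rule prod.cong[OF refl])
    fix e assume "e \<in> edges"
    have "kdelta (s' (fst (vtx_ends e))) (s' (snd (vtx_ends e))) = 0
        \<or> kdelta (s' (fst (vtx_ends e))) (s' (snd (vtx_ends e))) = 1"
      unfolding kdelta_def by simp
    then show "exp (?term e) = (if e \<in> agree \<xi> then (1 - a) / b else 1)
       + (if e \<in> agree \<xi> then real (card Q') * a / b else 0)
         * of_bool (s' (fst (vtx_ends e)) = s' (snd (vtx_ends e)))"
      using exp_edge_factor cfg_agree_iff[OF \<open>e \<in> edges\<close>, of \<xi>]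
      by (cases "e \<in> agree \<xi>") (simp_all add: kdelta_def)
  qed
  finally show ?thesis .
qed

lemma sum_mu_weight_cfg:
  "(\<Sum>s'\<in>verts \<rightarrow>\<^sub>E Q'. mu_weight D alpha rot (card Q') a b (cfg \<xi>) s') = marginal_weight \<xi>"
proof -
  let ?A = "agree \<xi>" and ?q = "real (card Q')"
  have A: "?A \<subseteq> edges" by (rule agreeing_edges_subset)
  have "finite ?A" using A finite_edges by (rule finite_subset)
  have "(\<Sum>s'\<in>verts \<rightarrow>\<^sub>E Q'. mu_weight D alpha rot (card Q') a b (cfg \<xi>) s')
      = (\<Sum>w\<in>Pow edges. (\<Prod>e\<in>edges - w. if e \<in> ?A then (1 - a) / b else 1)
          * (\<Prod>e\<in>w. if e \<in> ?A then ?q * a / b else 0) * ?q ^ ncomponents verts vtx_ends w)"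
    unfolding mu_weight_cfg by (rule fk_expansion[OF finite_verts finite_Q' finite_edges vtx_ends_in])
  also have "\<dots> = (\<Sum>w\<in>Pow ?A. ((1 - a) / b) ^ card (?A - w) * (?q * a / b) ^ card w
      * ?q ^ ncomponents verts vtx_ends w)"
    by (rule sum_Pow_restrict[OF finite_edges A])
  also have "\<dots> = (\<Sum>w\<in>Pow ?A. (1 / b) ^ card ?A
      * (a ^ card w * (1 - a) ^ card (?A - w) * fk_weight (card Q') verts vtx_ends w))"
  proof (rule sum.cong[OF refl])
    fix w assume "w \<in> Pow ?A"
    then have "w \<subseteq> ?A" "finite w" using \<open>finite ?A\<close> finite_subset by auto
    then have "card ?A = card (?A - w) + card w"
      using card_Diff_subset card_mono[OF \<open>finite ?A\<close>] by (metis le_add_diff_inverse2)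
    then show "((1 - a) / b) ^ card (?A - w) * (?q * a / b) ^ card w * ?q ^ ncomponents verts vtx_ends w
        = (1 / b) ^ card ?A * (a ^ card w * (1 - a) ^ card (?A - w) * fk_weight (card Q') verts vtx_ends w)"
      unfolding fk_weight_def by (simp add: power_add power_mult_distrib power_divide field_simps)
  qed
  also have "\<dots> = marginal_weight \<xi>"
    unfolding marginal_weight_def bernoulli_avg_def by (simp add: sum_distrib_left algebra_simps)
  finally show ?thesis .
qed

lemma mu_marg_cfg:
  "mu_marg D alpha rot Q Q' a b (cfg \<xi>) =
     (1 / (\<Sum>p\<in>(verts \<rightarrow>\<^sub>E Q) \<times> (verts \<rightarrow>\<^sub>E Q'). mu_weight D alpha rot (card Q') a b (fst p) (snd p)))
     * marginal_weight \<xi>"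
  unfolding mu_marg_def mu_prob_def sum_mu_weight_cfg[symmetric] sum_distrib_left
  using cfg_PiE by (intro sum.cong refl) simp

lemma dual_weight_as_product:
  "(if eta_dual D alpha rot s' \<inter> (edges - agree \<xi>) = {} then a ^ card (eta_dual D alpha rot s') else 0)
    = (\<Prod>e\<in>edges. (if e \<in> agree \<xi> then a else 0) + (if e \<in> agree \<xi> then 1 - a else 1)
        * of_bool (s' (fst (fce_ends e)) = s' (snd (fce_ends e))))"
proof -
  let ?A = "agree \<xi>" and ?H = "eta_dual D alpha rot s'"
  have H: "?H = {e\<in>edges. s' (fst (fce_ends e)) \<noteq> s' (snd (fce_ends e))}" by (rule eta_dual_eq)
  have "(\<Prod>e\<in>edges. (if e \<in> ?A then a else 0) + (if e \<in> ?A then 1 - a else 1)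
        * of_bool (s' (fst (fce_ends e)) = s' (snd (fce_ends e))))
      = (\<Prod>e\<in>edges. if e \<in> ?H then (if e \<in> ?A then a else 0) else 1)"
    by (rule prod.cong[OF refl]) (auto simp: H)
  also have "\<dots> = (if ?H \<inter> (edges - ?A) = {} then a ^ card ?H else 0)"
  proof (cases "?H \<inter> (edges - ?A) = {}")
    case True
    then have "(\<Prod>e\<in>edges. if e \<in> ?H then (if e \<in> ?A then a else 0) else 1)
        = (\<Prod>e\<in>edges. if e \<in> ?H then a else 1)"
      by (intro prod.cong) auto
    also have "\<dots> = a ^ card ?H"
      using finite_edges H by (simp add: prod.If_cases Int_absorb1 Int_def)
    finally show ?thesis using True by simp
  next
    case False
    then have "(\<Prod>e\<in>edges. if e \<in> ?H then (if e \<in> ?A then a else 0) else 1) = 0"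
      using finite_edges by (intro prod_zero) auto
    then show ?thesis using False by simp
  qed
  finally show ?thesis by simp
qed

lemma sum_dual_weight_expansion:
  "(\<Sum>s'\<in>faces \<rightarrow>\<^sub>E Q'. if eta_dual D alpha rot s' \<inter> (edges - agree \<xi>) = {}
      then a ^ card (eta_dual D alpha rot s') else 0)
    = (\<Sum>r\<in>Pow (agree \<xi>). (1 - a) ^ card (agree \<xi> - r) * a ^ card r
        * real (card Q') ^ ncomponents faces fce_ends (edges - r))"
proof -
  let ?A = "agree \<xi>" and ?q = "real (card Q')"
  let ?x = "\<lambda>e. if e \<in> ?A then a else 0" and ?y = "\<lambda>e. if e \<in> ?A then 1 - a else 1"
  have "(\<Sum>s'\<in>faces \<rightarrow>\<^sub>E Q'. if eta_dual D alpha rot s' \<inter> (edges - ?A) = {}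
        then a ^ card (eta_dual D alpha rot s') else 0)
      = (\<Sum>w\<in>Pow edges. (\<Prod>e\<in>edges - w. ?x e) * (\<Prod>e\<in>w. ?y e) * ?q ^ ncomponents faces fce_ends w)"
    unfolding dual_weight_as_product by (rule fk_expansion[OF finite_faces finite_Q' finite_edges fce_ends_in])
  also have "\<dots> = (\<Sum>r\<in>Pow edges. (\<Prod>e\<in>edges - (edges - r). ?x e) * (\<Prod>e\<in>edges - r. ?y e)
      * ?q ^ ncomponents faces fce_ends (edges - r))"
    by (rule sum_Pow_Diff)
  also have "\<dots> = (\<Sum>r\<in>Pow edges. (\<Prod>e\<in>edges - r. ?y e) * (\<Prod>e\<in>r. ?x e)
      * ?q ^ ncomponents faces fce_ends (edges - r))"
    by (intro sum.cong refl) (simp add: double_diff)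
  also have "\<dots> = (\<Sum>r\<in>Pow ?A. (1 - a) ^ card (?A - r) * a ^ card r * ?q ^ ncomponents faces fce_ends (edges - r))"
    by (rule sum_Pow_restrict[OF finite_edges agreeing_edges_subset])
  finally show ?thesis .
qed

lemma sum_dual_weight:
  "(\<Sum>s'\<in>faces \<rightarrow>\<^sub>E Q'. if eta_dual D alpha rot s' \<inter> (edges - agree \<xi>) = {}
      then a ^ card (eta_dual D alpha rot s') else 0) * real (card Q') ^ card verts
    = real (card Q') * bernoulli_avg a (fk_weight (card Q') verts vtx_ends) (agree \<xi>)"
proof -
  let ?A = "agree \<xi>" and ?q = "real (card Q')"
  have "?q ^ (ncomponents faces fce_ends (edges - r) + card verts) = ?q * fk_weight (card Q') verts vtx_ends r"
    if "r \<in> Pow ?A" for r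
  proof -
    have "r \<subseteq> edges" using that agreeing_edges_subset[of vtx_ends edges \<xi>] by auto
    then show ?thesis unfolding planar_duality[OF \<open>r \<subseteq> edges\<close>] fk_weight_def by simp
  qed
  then show ?thesis
    unfolding sum_dual_weight_expansion bernoulli_avg_def sum_distrib_right sum_distrib_left
    by (intro sum.cong refl) (simp add: power_add[symmetric] algebra_simps)
qed

lemma P_marg_cfg:
  "P_marg D alpha rot Q Q' a b (cfg \<xi>) =
     (b ^ card edges * real (card Q')
       / ((\<Sum>p\<in>Sigma_space D alpha rot Q Q'. P_weight D alpha rot a b (fst p) (snd p)) * real (card Q') ^ card verts))
     * marginal_weight \<xi>"
proof -
  let ?Z = "\<Sum>p\<in>Sigma_space D alpha rot Q Q'. P_weight D alpha rot a b (fst p) (snd p)"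
  let ?A = "agree \<xi>" and ?q = "real (card Q')"
  let ?g = "\<lambda>s'. if eta_dual D alpha rot s' \<inter> (edges - ?A) = {} then a ^ card (eta_dual D alpha rot s') else 0"
  have "P_marg D alpha rot Q Q' a b (cfg \<xi>) = (\<Sum>s'\<in>faces \<rightarrow>\<^sub>E Q'. (b ^ card (edges - ?A) / ?Z) * ?g s')"
    unfolding P_marg_def
  proof (rule sum.cong[OF refl])
    fix s' assume "s' \<in> faces \<rightarrow>\<^sub>E Q'"
    then have "(cfg \<xi>, s') \<in> Sigma_space D alpha rot Q Q' \<longleftrightarrow> eta_dual D alpha rot s' \<inter> (edges - ?A) = {}"
      using cfg_PiE eta_primal_cfg unfolding Sigma_space_def by auto
    then show "P_prob D alpha rot Q Q' a b (cfg \<xi>) s' = (b ^ card (edges - ?A) / ?Z) * ?g s'"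
      unfolding P_prob_def P_weight_def eta_primal_cfg by simp
  qed
  also have "\<dots> = (b ^ card (edges - ?A) / ?Z) * (\<Sum>s'\<in>faces \<rightarrow>\<^sub>E Q'. ?g s')"
    by (rule sum_distrib_left[symmetric])
  also have "(\<Sum>s'\<in>faces \<rightarrow>\<^sub>E Q'. ?g s')
      = ?q * bernoulli_avg a (fk_weight (card Q') verts vtx_ends) ?A / ?q ^ card verts"
    using sum_dual_weight[of \<xi>] card_Q' by (simp add: eq_divide_eq)
  also have "b ^ card (edges - ?A) = b ^ card edges * (1 / b) ^ card ?A"
  proof -
    have "finite ?A" using agreeing_edges_subset finite_edges by (rule finite_subset)
    then have "card edges = card (edges - ?A) + card ?A"
      using agreeing_edges_subset card_Diff_subset card_mono[OF finite_edges] by (metis le_add_diff_inverse2)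
    then have "b ^ card edges = b ^ card (edges - ?A) * b ^ card ?A" by (simp add: power_add)
    then show ?thesis using b_pos by (simp add: power_one_over field_simps)
  qed
  finally show ?thesis
    unfolding marginal_weight_def by (simp add: field_simps)
qed

theorem FKG_lattice_marginals:
  "FKG_lattice verts (\<lambda>\<xi>. mu_marg D alpha rot Q Q' a b (cfg \<xi>))"
  "FKG_lattice verts (\<lambda>\<xi>. P_marg D alpha rot Q Q' a b (cfg \<xi>))"
  by (rule FKG_lattice_scale[OF FKG_lattice_marginal_weight], rule mu_marg_cfg P_marg_cfg)+

end

theorem proposition4p5:
  fixes D :: "'d set" and alpha rot :: "'d \<Rightarrow> 'd"
    and Q Q' :: "complex set" and a b :: real and f :: "complex \<Rightarrow> nat"
  assumes "planar_map D alpha rot"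
    and "finite Q" and "uminus ` Q = Q" and "card Q = 2"
    and "finite Q'" and "uminus ` Q' = Q'" and "card Q' \<ge> 1"
    and "0 < a" and "a < 1" and "0 < b" and "b \<le> 1"
    and "bij_betw f Q {0, 1}"
  shows "FKG_lattice (Verts D rot)
           (\<lambda>\<xi>. mu_marg D alpha rot Q Q' a b (config_of f Q (Verts D rot) \<xi>))
       \<and> FKG_lattice (Verts D rot)
           (\<lambda>\<xi>. P_marg D alpha rot Q Q' a b (config_of f Q (Verts D rot) \<xi>))"
proof -
  interpret planar_model D alpha rot Q Q' a b f
    using assms by unfold_locales auto
  show ?thesis using FKG_lattice_marginals by blast
qed

end
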